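(* Let $\ell=1$, $e>1$, and the charge $s_1=0$. For $n\ge1$ let $C_{0,n}=\sigma_{1-n}\cdots\sigma_{-1}\sigma_0$ (indices read modulo $e$, the rightmost factor applied first) and let $\nu_n$ be the partition whose transpose is $(n,\,n-(e-1),\,n-2(e-1),\dots)$ (positive terms only). Then for every singular partition $\lambda$ we have $C_{0,n}\lambda=\lambda+\nu_n$, and for every cosingular partition $\mu$ we have $C^*_{0,n}\mu=(\mu^t+\nu_n^t)^t$, where $+$ denotes componentwise (row by row) sum of partitions and $t$ denotes transposition.
   Context: Boxes of a partition are pairs $b=(x,y)$ (row $x$, column $y$) with content $\mathrm{cont}(b)=y-x$; $b$ is an $i$-box ($i\in\mathbb{Z}/e\mathbb{Z}$) if $\mathrm{cont}(b)\equiv i\pmod e$. Addable/removable boxes are as usual. The $i$-signature of $\lambda$ lists the addable ($+$) and removable ($-$) $i$-boxes in decreasing order of content. Usual crystal: reduce the signature by repeatedly deleting a $-$ immediately followed by a $+$; remaining sets $I_+$ (all before) and $I_-$; $\tilde f_i$ adds the box of the last element of $I_+$, $\tilde e_i$ removes the box of the first element of $I_-$ (giving $0$ if the set is empty); $\lambda$ is singular if $\tilde e_i\lambda=0$ for all $i$; if $I_-=\varnothing$ set $\sigma_i\lambda=\tilde f_i^{|I_+|}\lambda$. Dual crystal: reduce instead by repeatedly deleting a $+$ immediately followed by a $-$, obtaining $I^*_+$ (all after) and $I^*_-$; $\tilde f^*_i$ adds the box of the first element of $I^*_+$, $\tilde e^*_i$ removes the box of the last element of $I^*_-$; $\mu$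 is cosingular if $\tilde e^*_i\mu=0$ for all $i$; if $I^*_-=\varnothing$ set $\sigma^*_i\mu=(\tilde f^*_i)^{|I^*_+|}\mu$. Then $C_{0,n}\lambda=\sigma_{1-n}\cdots\sigma_0\lambda$ and $C^*_{0,n}\mu=\sigma^*_{1-n}\cdots\sigma^*_0\mu$. *)

theory Defs
  imports Main
begin

text \<open>Partitions are weakly decreasing lists of positive naturals (rows, top to bottom).
 Rows and columns are indexed from 1; the box (x,y) lies in row x, column y.
 Level one (\<ell> = 1) with charge s_1 = 0: the content of (x,y) is y - x.\<close>

definition is_partition :: "nat list \<Rightarrow> bool" where
  "is_partition lam \<longleftrightarrow> sorted_wrt (\<ge>) lam \<and> 0 \<notin> set lam"

definition rowlen :: "nat list \<Rightarrow> nat \<Rightarrow> nat" where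
  "rowlen lam x = (if 1 \<le> x \<and> x \<le> length lam then lam ! (x - 1) else 0)"

definition content :: "nat \<times> nat \<Rightarrow> int" where
  "content b = int (snd b) - int (fst b)"

definition addable_row :: "nat list \<Rightarrow> nat \<Rightarrow> bool" where
  "addable_row lam x \<longleftrightarrow> 1 \<le> x \<and> x \<le> length lam + 1 \<and> (x = 1 \<or> rowlen lam x < rowlen lam (x - 1))"

definition removable_row :: "nat list \<Rightarrow> nat \<Rightarrow> bool" where
  "removable_row lam x \<longleftrightarrow> 1 \<le> x \<and> x \<le> length lam \<and> rowlen lam (x + 1) < rowlen lam x"

text \<open>All addable (True = +) and removable (False = -) boxes, each tagged with its sign.\<close>
definition ar_boxes :: "nat list \<Rightarrow> (bool \<times> (nat \<times> nat)) list" where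
  "ar_boxes lam = concat (map (\<lambda>x.
      (if addable_row lam x then [(True, (x, rowlen lam x + 1))] else []) @
      (if removable_row lam x then [(False, (x, rowlen lam x))] else []))
     [1..<length lam + 2])"

definition isig :: "nat \<Rightarrow> int \<Rightarrow> nat list \<Rightarrow> (bool \<times> (nat \<times> nat)) list" where
  "isig e i lam = sort_key (\<lambda>sb. - content (snd sb))
      (filter (\<lambda>sb. content (snd sb) mod int e = i mod int e) (ar_boxes lam))"

text \<open>Delete the first adjacent pair whose signs are (s, not s), if any.
 s = False: delete "-+" (usual crystal); s = True: delete "+-" (dual crystal).\<close>
fun del_pair :: "bool \<Rightarrow> (bool \<times> 'a) list \<Rightarrow> (bool \<times> 'a) list" where
  "del_pair s (a # b # xs) = (if fst a = s \<and> fst b = (\<not> s) then xs else a # del_pair s (b # xs))"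
| "del_pair s xs = xs"

text \<open>Repeated deletion; length xs iterations suffice to reach the fixed point.\<close>
definition reduce :: "bool \<Rightarrow> (bool \<times> 'a) list \<Rightarrow> (bool \<times> 'a) list" where
  "reduce s xs = (del_pair s ^^ length xs) xs"

definition Iplus :: "nat \<Rightarrow> int \<Rightarrow> nat list \<Rightarrow> (nat \<times> nat) list" where
  "Iplus e i lam = map snd (filter fst (reduce False (isig e i lam)))"
definition Iminus :: "nat \<Rightarrow> int \<Rightarrow> nat list \<Rightarrow> (nat \<times> nat) list" where
  "Iminus e i lam = map snd (filter (Not \<circ> fst) (reduce False (isig e i lam)))"
definition Iplus_dual :: "nat \<Rightarrow> int \<Rightarrow> nat list \<Rightarrow> (nat \<times> nat) list" where
  "Iplus_dual e i lam = map snd (filter fst (reduce True (isig e i lam)))"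
definition Iminus_dual :: "nat \<Rightarrow> int \<Rightarrow> nat list \<Rightarrow> (nat \<times> nat) list" where
  "Iminus_dual e i lam = map snd (filter (Not \<circ> fst) (reduce True (isig e i lam)))"

definition add_box :: "nat list \<Rightarrow> nat \<times> nat \<Rightarrow> nat list" where
  "add_box lam b = (if fst b = length lam + 1 then lam @ [1]
                    else lam[fst b - 1 := lam ! (fst b - 1) + 1])"
definition remove_box :: "nat list \<Rightarrow> nat \<times> nat \<Rightarrow> nat list" where
  "remove_box lam b = filter (\<lambda>v. v \<noteq> 0) (lam[fst b - 1 := lam ! (fst b - 1) - 1])"

text \<open>Crystal operators; None plays the role of 0.\<close>
definition f_op :: "nat \<Rightarrow> int \<Rightarrow> nat list \<Rightarrow> nat list option" where
  "f_op e i lam = (if Iplus e i lam = [] then None else Some (add_box lam (last (Iplus e i lam))))"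
definition e_op :: "nat \<Rightarrow> int \<Rightarrow> nat list \<Rightarrow> nat list option" where
  "e_op e i lam = (if Iminus e i lam = [] then None else Some (remove_box lam (hd (Iminus e i lam))))"
definition f_dual :: "nat \<Rightarrow> int \<Rightarrow> nat list \<Rightarrow> nat list option" where
  "f_dual e i lam = (if Iplus_dual e i lam = [] then None else Some (add_box lam (hd (Iplus_dual e i lam))))"
definition e_dual :: "nat \<Rightarrow> int \<Rightarrow> nat list \<Rightarrow> nat list option" where
  "e_dual e i lam = (if Iminus_dual e i lam = [] then None else Some (remove_box lam (last (Iminus_dual e i lam))))"

definition singular :: "nat \<Rightarrow> nat list \<Rightarrow> bool" where
  "singular e lam \<longleftrightarrow> (\<forall>i. e_op e i lam = None)"
definition cosingular :: "nat \<Rightarrow> nat list \<Rightarrow> bool" where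
  "cosingular e lam \<longleftrightarrow> (\<forall>i. e_dual e i lam = None)"

fun opow :: "(nat list \<Rightarrow> nat list option) \<Rightarrow> nat \<Rightarrow> nat list \<Rightarrow> nat list option" where
  "opow F 0 lam = Some lam"
| "opow F (Suc k) lam = Option.bind (opow F k lam) F"

definition sigma :: "nat \<Rightarrow> int \<Rightarrow> nat list \<Rightarrow> nat list option" where
  "sigma e i lam = (if Iminus e i lam = [] then opow (f_op e i) (length (Iplus e i lam)) lam else None)"
definition sigma_dual :: "nat \<Rightarrow> int \<Rightarrow> nat list \<Rightarrow> nat list option" where
  "sigma_dual e i lam = (if Iminus_dual e i lam = [] then opow (f_dual e i) (length (Iplus_dual e i lam)) lam else None)"

text \<open>C_{0,n} = \<sigma>_{1-n} ... \<sigma>_{-1} \<sigma>_0, rightmost applied first.\<close>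
definition C0 :: "nat \<Rightarrow> nat \<Rightarrow> nat list \<Rightarrow> nat list option" where
  "C0 e n lam = fold (\<lambda>k acc. Option.bind acc (sigma e (- int k))) [0..<n] (Some lam)"
definition C0_dual :: "nat \<Rightarrow> nat \<Rightarrow> nat list \<Rightarrow> nat list option" where
  "C0_dual e n lam = fold (\<lambda>k acc. Option.bind acc (sigma_dual e (- int k))) [0..<n] (Some lam)"

definition ptranspose :: "nat list \<Rightarrow> nat list" where
  "ptranspose lam = map (\<lambda>j. length (filter (\<lambda>v. j \<le> v) lam)) [1..<foldr max lam 0 + 1]"

definition padd :: "nat list \<Rightarrow> nat list \<Rightarrow> nat list" where
  "padd lam mu = map (\<lambda>x. rowlen lam x + rowlen mu x) [1..<max (length lam) (length mu) + 1]"

definition nu :: "nat \<Rightarrow> nat \<Rightarrow> nat list" where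
  "nu e n = ptranspose (filter (\<lambda>v. 0 < v) (map (\<lambda>k. n - k * (e - 1)) [0..<n]))"

end

(*
  A singular partition has all row lengths divisible by e: otherwise let x be the lowest row whose
  length is not divisible by e and i the residue of its last box. In the i-signature that
  removable box is followed only by cancelling -+ pairs, since all lower rows have lengths
  divisible by e, so its - survives the reduction and e_i does not vanish.

  If all rows of lambda are divisible by e, the i-signature of lambda plus a partial nu, read
  gap by gap (removable box of row y, addable box of row y + 1), consists of cancelling -+ pairs
  and of isolated +'s; for i = -m the +'s sit exactly in the rows where nu_(m+1) is longer than
  nu_m. Hence sigma_(-m) adds one box to each of these rows, and C_(0,n) lambda = lambda + nu_n by
  induction on n.

  Conjugation exchanges the two crystals: the dual i-signature of the conjugate of mu is the
  reversed (-i)-signature of mu with every box transposed. So sigma*_i commutes with conjugation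
  up to i -> -i, mu is cosingular iff its conjugate is singular, and C*_(0,n) mu is the conjugate
  of sigma_(n-1) ... sigma_0 applied to the conjugate of mu. The same gap analysis with residues
  +m shows that sigma_m adds a box to each row x with (x - 1)(e - 1) <= m, so after n steps row x
  has grown by n - (x - 1)(e - 1), the length of row x of the conjugate of nu_n.
*)

theory Submission
  imports Defs
begin

lemma nat_eqI_le:
  assumes "\<And>y::nat. 1 \<le> y \<Longrightarrow> y \<le> a \<longleftrightarrow> y \<le> b"
  shows "a = b"
proof (rule le_antisym)
  show "a \<le> b" using assms[of a] by (cases "a = 0") auto
  show "b \<le> a" using assms[of b] by (cases "b = 0") auto
qed

lemma Suc_div_dvd: "Suc m div d = m div d + (if d dvd Suc m then 1 else 0)"
  by (simp add: div_Suc dvd_eq_mod_eq_0)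

lemma not_dvd_mult_add: "0 < r \<Longrightarrow> r < int e \<Longrightarrow> \<not> int e dvd int e * q + r"
  by (metis dvd_add_right_iff dvd_triv_left zdvd_not_zless)

lemma upt_append_split: "a \<le> b \<Longrightarrow> b \<le> c \<Longrightarrow> [a..<c] = [a..<b] @ [b..<c]"
  using upt_add_eq_append[of a b "c - b"] by simp

lemma upt_split_at: "a \<le> x \<Longrightarrow> x < c \<Longrightarrow> [a..<c] = [a..<x] @ x # [Suc x..<c]"
  using upt_append_split[of a x c] upt_conv_Cons[of x c] by simp

lemma concat_map_singletons:
  "concat (map (\<lambda>y. if P (y + 1) then [F (y + 1)] else []) [0..<M]) = map F (filter P [1..<M + 1])"
  by (induction M) auto

lemma concat_map_append_shift:
  "concat (map (\<lambda>x. a x @ b x) [1..<m + 2]) =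
    a 1 @ concat (map (\<lambda>y. b y @ a (y + 1)) [1..<m + 1]) @ b (m + 1)"
  by (induction m) simp_all

section \<open>Reduction of signatures\<close>

text \<open>Deleting cancelling pairs in any order leads to the same word, which a single left-to-right
  pass with a stack computes.\<close>

definition stack_step :: "bool \<Rightarrow> (bool \<times> 'a) list \<Rightarrow> bool \<times> 'a \<Rightarrow> (bool \<times> 'a) list" where
  "stack_step s acc a =
     (if fst a = (\<not> s) \<and> acc \<noteq> [] \<and> fst (last acc) = s then butlast acc else acc @ [a])"

definition stack_reduce :: "bool \<Rightarrow> (bool \<times> 'a) list \<Rightarrow> (bool \<times> 'a) list" where
  "stack_reduce s xs = foldl (stack_step s) [] xs"

definition pair_free :: "bool \<Rightarrow> (bool \<times> 'a) list \<Rightarrow> bool" where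
  "pair_free s xs \<longleftrightarrow> (\<forall>u a b v. xs = u @ a # b # v \<longrightarrow> \<not> (fst a = s \<and> fst b = (\<not> s)))"

lemma pair_free_Cons:
  "pair_free s (a # b # xs) \<longleftrightarrow> \<not> (fst a = s \<and> fst b = (\<not> s)) \<and> pair_free s (b # xs)"
proof
  assume "pair_free s (a # b # xs)"
  then show "\<not> (fst a = s \<and> fst b = (\<not> s)) \<and> pair_free s (b # xs)"
    unfolding pair_free_def by (metis append_Cons append_Nil)
next
  assume "\<not> (fst a = s \<and> fst b = (\<not> s)) \<and> pair_free s (b # xs)"
  then show "pair_free s (a # b # xs)"
    unfolding pair_free_def
  proof (intro allI impI)
    fix u c d v assume eq: "a # b # xs = u @ c # d # v"
    show "\<not> (fst c = s \<and> fst d = (\<not> s))"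
    proof (cases u)
      case Nil
      then show ?thesis using eq \<open>\<not> (fst a = s \<and> fst b = (\<not> s)) \<and> _\<close> by simp
    next
      case (Cons w u')
      then have "b # xs = u' @ c # d # v" using eq by simp
      then show ?thesis using \<open>_ \<and> pair_free s (b # xs)\<close> unfolding pair_free_def by blast
    qed
  qed
qed

lemma del_pair_cases:
  "del_pair s xs = xs \<and> pair_free s xs \<or>
   (\<exists>u a b v. xs = u @ a # b # v \<and> fst a = s \<and> fst b = (\<not> s) \<and> del_pair s xs = u @ v)"
proof (induction s xs rule: del_pair.induct)
  case (1 s a b xs)
  show ?case
  proof (cases "fst a = s \<and> fst b = (\<not> s)")
    case True
    then show ?thesis by (intro disjI2 exI[of _ "[]"]) auto
  next
    case False
    then have step: "del_pair s (a # b # xs) = a # del_pair s (b # xs)"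
      by (simp only: del_pair.simps if_False)
    from "1"[OF False] show ?thesis
    proof
      assume "del_pair s (b # xs) = b # xs \<and> pair_free s (b # xs)"
      then show ?thesis using False step by (simp add: pair_free_Cons)
    next
      assume "\<exists>u c d v. b # xs = u @ c # d # v \<and> fst c = s \<and> fst d = (\<not> s) \<and>
        del_pair s (b # xs) = u @ v"
      then show ?thesis using step by (metis append_Cons)
    qed
  qed
qed (auto simp: pair_free_def Cons_eq_append_conv)

lemma stack_reduce_cancel:
  "fst a = s \<Longrightarrow> fst b = (\<not> s) \<Longrightarrow> stack_reduce s (u @ a # b # v) = stack_reduce s (u @ v)"
  by (simp add: stack_reduce_def stack_step_def)

lemma stack_reduce_pair_free: "pair_free s xs \<Longrightarrow> stack_reduce s xs = xs"
proof (induction xs rule: rev_induct)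
  case (snoc a xs)
  have "pair_free s xs" using snoc.prems unfolding pair_free_def by force
  moreover have "\<not> (fst a = (\<not> s) \<and> xs \<noteq> [] \<and> fst (last xs) = s)"
  proof
    assume h: "fst a = (\<not> s) \<and> xs \<noteq> [] \<and> fst (last xs) = s"
    then have "xs @ [a] = butlast xs @ last xs # a # []" by simp
    with snoc.prems h show False unfolding pair_free_def by blast
  qed
  moreover have "stack_step s xs a = xs @ [a]"
    unfolding stack_step_def by (rule if_not_P) fact
  ultimately show ?case using snoc.IH by (simp add: stack_reduce_def)
qed (simp add: stack_reduce_def)

lemma stack_reduce_del_pair: "stack_reduce s (del_pair s xs) = stack_reduce s xs"
  using del_pair_cases[of s xs] stack_reduce_cancel by metis

lemma pair_free_del_pair_iterate: "length xs \<le> k \<Longrightarrow> pair_free s ((del_pair s ^^ k) xs)"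
proof (induction k arbitrary: xs)
  case 0 then show ?case by (simp add: pair_free_def)
next
  case (Suc k)
  have shift: "(del_pair s ^^ Suc k) xs = (del_pair s ^^ k) (del_pair s xs)"
    by (simp add: funpow_Suc_right del: funpow.simps)
  from del_pair_cases[of s xs] show ?case
  proof
    assume fixed: "del_pair s xs = xs \<and> pair_free s xs"
    then have "(del_pair s ^^ k) xs = xs" by (induction k) simp_all
    then show ?thesis using fixed shift by simp
  next
    assume "\<exists>u a b v. xs = u @ a # b # v \<and> fst a = s \<and> fst b = (\<not> s) \<and> del_pair s xs = u @ v"
    then have "length (del_pair s xs) \<le> k" using Suc.prems by auto
    then show ?thesis using Suc.IH shift by simp
  qed
qed

lemma pair_free_reduce: "pair_free s (reduce s xs)"
  unfolding reduce_def by (rule pair_free_del_pair_iterate) simp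

lemma reduce_eq_stack_reduce: "reduce s xs = stack_reduce s xs"
proof -
  have "stack_reduce s ((del_pair s ^^ k) xs) = stack_reduce s xs" for k
    by (induction k) (simp_all add: stack_reduce_del_pair)
  then show ?thesis
    using stack_reduce_pair_free[OF pair_free_reduce, of s xs] by (simp add: reduce_def)
qed

lemma pair_free_rev: "pair_free s xs \<Longrightarrow> pair_free (\<not> s) (rev xs)"
  unfolding pair_free_def
proof (intro allI impI)
  fix u a b v assume "\<forall>u a b v. xs = u @ a # b # v \<longrightarrow> \<not> (fst a = s \<and> fst b = (\<not> s))"
    and "rev xs = u @ a # b # v"
  moreover from this(2) have "xs = rev v @ b # a # rev u" by (simp add: rev_swap)
  ultimately show "\<not> (fst a = (\<not> s) \<and> fst b = (\<not> \<not> s))" by blast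
qed

lemma pair_free_False_if_sorted: "sorted_wrt (\<lambda>a b. fst b \<longrightarrow> fst a) xs \<Longrightarrow> pair_free False xs"
  unfolding pair_free_def by (auto simp: sorted_wrt_append)

lemma set_reduce_subset: "set (reduce s xs) \<subseteq> set xs"
proof -
  have del: "set (del_pair s ys) \<subseteq> set ys" for ys
    by (induction s ys rule: del_pair.induct) auto
  have "set ((del_pair s ^^ n) xs) \<subseteq> set xs" for n
    by (induction n) (use del in auto)
  then show ?thesis by (simp add: reduce_def)
qed

lemma reduce_rev: "reduce True (rev xs) = rev (reduce False xs)"
proof -
  have "stack_reduce False (rev ((del_pair True ^^ k) ys)) = stack_reduce False (rev ys)" for k ys
  proof (induction k)
    case (Suc k)
    from del_pair_cases[of True "(del_pair True ^^ k) ys"] show ?case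
    proof
      assume "\<exists>u a b v. (del_pair True ^^ k) ys = u @ a # b # v \<and> fst a = True \<and>
        fst b = (\<not> True) \<and> del_pair True ((del_pair True ^^ k) ys) = u @ v"
      then obtain u a b v where "(del_pair True ^^ k) ys = u @ a # b # v" "fst a = True"
        "fst b = False" "del_pair True ((del_pair True ^^ k) ys) = u @ v" by auto
      then show ?thesis
        using Suc.IH stack_reduce_cancel[of b False a "rev v" "rev u"] by simp
    qed (use Suc.IH in simp)
  qed simp
  from this[of "length xs" "rev xs"]
  have "stack_reduce False (rev (reduce True (rev xs))) = stack_reduce False xs"
    by (simp add: reduce_def)
  moreover have "pair_free False (rev (reduce True (rev xs)))"
    using pair_free_rev[OF pair_free_reduce, of True] by simp
  ultimately show ?thesis using stack_reduce_pair_free by (fastforce simp: reduce_eq_stack_reduce)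
qed

lemma reduce_map: "(\<And>a. fst (f a) = fst a) \<Longrightarrow> reduce s (map f xs) = map f (reduce s xs)"
proof (induction xs rule: rev_induct)
  case (snoc a xs)
  have "stack_step s (map f acc) (f a) = map f (stack_step s acc a)" for acc
    using snoc.prems by (cases "acc = []") (simp_all add: stack_step_def map_butlast last_map)
  then show ?case using snoc by (simp add: reduce_eq_stack_reduce stack_reduce_def)
qed (simp add: reduce_def)

definition cancelling_block :: "bool \<Rightarrow> (bool \<times> 'a) list \<Rightarrow> bool" where
  "cancelling_block s w \<longleftrightarrow> w = [] \<or> (\<exists>a b. w = [(s, a), (\<not> s, b)])"

lemma foldl_stack_step_cancelling_blocks:
  "foldl (stack_step s) acc (concat (map h ys)) =
   foldl (stack_step s) acc (concat (map (\<lambda>y. if cancelling_block s (h y) then [] else h y) ys))"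
proof (induction ys arbitrary: acc)
  case (Cons y ys)
  have "cancelling_block s (h y) \<Longrightarrow> foldl (stack_step s) acc (h y) = acc"
    unfolding cancelling_block_def stack_step_def by auto
  then show ?case using Cons by simp
qed simp

lemma minus_survives_cancelling_blocks:
  assumes "\<forall>w\<in>set ws. cancelling_block False w"
  shows "(False, r) \<in> set (reduce False (u @ (False, r) # concat ws))"
proof -
  have "foldl (stack_step False) acc (concat ws) = acc" for acc :: "(bool \<times> 'a) list"
  proof -
    have "concat (map (\<lambda>w. if cancelling_block False w then [] else w) ws) = []"
      using assms by (induction ws) auto
    with foldl_stack_step_cancelling_blocks[of False acc "\<lambda>w. w" ws] show ?thesis
      by (simp only: map_ident foldl_Nil)
  qed
  then show ?thesis
    by (simp add: reduce_eq_stack_reduce stack_reduce_def stack_step_def)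
qed

section \<open>Partitions and their addable and removable boxes\<close>

lemma rowlen_0 [simp]: "rowlen k 0 = 0"
  by (simp add: rowlen_def)

lemma rowlen_beyond: "length k < x \<Longrightarrow> rowlen k x = 0"
  by (simp add: rowlen_def)

lemma addable_row_iff: "addable_row k x \<longleftrightarrow> 1 \<le> x \<and> (x = 1 \<or> rowlen k x < rowlen k (x - 1))"
  unfolding addable_row_def by (auto simp: rowlen_def split: if_splits)

lemma removable_row_iff: "removable_row k x \<longleftrightarrow> 1 \<le> x \<and> rowlen k (x + 1) < rowlen k x"
  unfolding removable_row_def by (auto simp: rowlen_def split: if_splits)

lemma rowlen_antimono:
  assumes "is_partition k" "1 \<le> x" "x \<le> y"
  shows "rowlen k y \<le> rowlen k x"
proof (cases "y \<le> length k")
  case True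
  then show ?thesis using assms unfolding is_partition_def rowlen_def
    by (cases "x = y") (auto simp: sorted_wrt_iff_nth_less)
qed (simp add: rowlen_beyond)

lemma rowlen_pos:
  assumes "is_partition k" "1 \<le> x" "x \<le> length k"
  shows "0 < rowlen k x"
proof -
  have "k ! (x - 1) \<in> set k" using assms by (intro nth_mem) simp
  then have "k ! (x - 1) \<noteq> 0" using assms(1) unfolding is_partition_def by metis
  then show ?thesis using assms by (simp add: rowlen_def)
qed

lemma is_partitionI:
  assumes "\<And>x. 1 \<le> x \<Longrightarrow> rowlen k (x + 1) \<le> rowlen k x"
    and "\<And>x. 1 \<le> x \<Longrightarrow> x \<le> length k \<Longrightarrow> 0 < rowlen k x"
  shows "is_partition k"
  unfolding is_partition_def
proof
  have t: "transp (\<lambda>a b::nat. b \<le> a)" by (auto simp: transp_def)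
  show "sorted_wrt (\<lambda>a b. b \<le> a) k"
    unfolding sorted_wrt_iff_nth_Suc_transp[OF t]
  proof (intro allI impI)
    fix i assume "Suc i < length k"
    then show "k ! Suc i \<le> k ! i" using assms(1)[of "Suc i"] by (simp add: rowlen_def)
  qed
  show "0 \<notin> set k"
  proof
    assume "0 \<in> set k"
    then obtain j where "j < length k" "k ! j = 0" by (metis in_set_conv_nth)
    then show False using assms(2)[of "Suc j"] by (simp add: rowlen_def)
  qed
qed

lemma partition_eqI:
  assumes "is_partition a" "is_partition b" "\<And>x. 1 \<le> x \<Longrightarrow> rowlen a x = rowlen b x"
  shows "a = b"
proof -
  have "length a = length b"
  proof (rule ccontr)
    assume "length a \<noteq> length b"
    then consider "length a < length b" | "length b < length a" by linarith
    then show False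
    proof cases
      case 1
      then show False
        using rowlen_pos[OF assms(2), of "length b"] rowlen_beyond[OF 1] assms(3) by simp
    next
      case 2
      then show False
        using rowlen_pos[OF assms(1), of "length a"] rowlen_beyond[OF 2] assms(3) by simp
    qed
  qed
  moreover have "a ! i = b ! i" if "i < length a" for i
    using assms(3)[of "Suc i"] that calculation by (simp add: rowlen_def)
  ultimately show ?thesis by (simp add: nth_equalityI)
qed

lemma length_padd: "length (padd a b) = max (length a) (length b)"
  by (simp add: padd_def del: upt_Suc)

lemma rowlen_padd: "1 \<le> x \<Longrightarrow> rowlen (padd a b) x = rowlen a x + rowlen b x"
proof -
  assume x: "1 \<le> x"
  show ?thesis
  proof (cases "x \<le> max (length a) (length b)")
    case True
    then have "[1..<max (length a) (length b) + 1] ! (x - 1) = x"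
      using x by (simp add: nth_upt del: upt_Suc)
    then show ?thesis using x True unfolding rowlen_def padd_def by (simp del: upt_Suc)
  next
    case False
    have "rowlen a x = 0" "rowlen b x = 0" using False by (simp_all add: rowlen_beyond)
    moreover have "rowlen (padd a b) x = 0"
      by (rule rowlen_beyond) (use False in \<open>simp add: length_padd not_le\<close>)
    ultimately show ?thesis by simp
  qed
qed

lemma is_partition_padd:
  assumes "is_partition a" "is_partition b"
  shows "is_partition (padd a b)"
proof (rule is_partitionI)
  fix x :: nat assume x: "1 \<le> x"
  show "rowlen (padd a b) (x + 1) \<le> rowlen (padd a b) x"
    using x rowlen_antimono[OF assms(1) x, of "x + 1"] rowlen_antimono[OF assms(2) x, of "x + 1"]
    by (simp add: rowlen_padd)
next
  fix x :: nat assume x: "1 \<le> x" "x \<le> length (padd a b)"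
  then have "x \<le> length a \<or> x \<le> length b" by (auto simp: length_padd)
  then show "0 < rowlen (padd a b) x"
    using rowlen_pos[OF assms(1) x(1)] rowlen_pos[OF assms(2) x(1)] x(1) by (auto simp: rowlen_padd)
qed


definition add_entry :: "nat list \<Rightarrow> nat \<Rightarrow> (bool \<times> (nat \<times> nat)) list" where
  "add_entry k x = (if addable_row k x then [(True, (x, rowlen k x + 1))] else [])"
definition rem_entry :: "nat list \<Rightarrow> nat \<Rightarrow> (bool \<times> (nat \<times> nat)) list" where
  "rem_entry k x = (if removable_row k x then [(False, (x, rowlen k x))] else [])"
definition row_entries :: "nat list \<Rightarrow> nat \<Rightarrow> (bool \<times> (nat \<times> nat)) list" where
  "row_entries k x = add_entry k x @ rem_entry k x"
definition gap_entries :: "nat list \<Rightarrow> nat \<Rightarrow> (bool \<times> (nat \<times> nat)) list" where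
  "gap_entries k y = rem_entry k y @ add_entry k (y + 1)"

lemma ar_boxes_eq_row_entries: "ar_boxes k = concat (map (row_entries k) [1..<length k + 2])"
  unfolding ar_boxes_def row_entries_def add_entry_def rem_entry_def by simp

lemma row_entries_beyond: "length k + 2 \<le> x \<Longrightarrow> row_entries k x = []"
  unfolding row_entries_def add_entry_def rem_entry_def addable_row_iff removable_row_iff
  by (simp add: rowlen_beyond)

lemma gap_entries_beyond: "length k + 1 \<le> y \<Longrightarrow> gap_entries k y = []"
  unfolding gap_entries_def add_entry_def rem_entry_def addable_row_iff removable_row_iff
  by (simp add: rowlen_beyond)

lemma ar_boxes_eq_row_entries_upt:
  assumes "length k + 2 \<le> M"
  shows "ar_boxes k = concat (map (row_entries k) [1..<M])"
  using upt_append_split[of 1 "length k + 2" M] assms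
  by (simp add: ar_boxes_eq_row_entries row_entries_beyond del: upt_Suc)

lemma ar_boxes_eq_gap_entries:
  assumes "length k + 1 \<le> M"
  shows "ar_boxes k = concat (map (gap_entries k) [0..<M])"
proof -
  have "rem_entry k (length k + 1) = []"
    by (simp add: rem_entry_def removable_row_iff rowlen_beyond)
  then have "ar_boxes k = add_entry k 1 @ concat (map (gap_entries k) [1..<length k + 1])"
    using concat_map_append_shift[of "add_entry k" "rem_entry k" "length k"]
    unfolding ar_boxes_eq_row_entries row_entries_def gap_entries_def by (simp del: upt_Suc)
  also have "\<dots> = concat (map (gap_entries k) [0..<length k + 1])"
    by (simp add: upt_rec[of 0] gap_entries_def rem_entry_def removable_row_iff del: upt_Suc)
  also have "\<dots> = concat (map (gap_entries k) [0..<M])"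
    using upt_append_split[of 0 "length k + 1" M] assms
    by (simp add: gap_entries_beyond del: upt_Suc)
  finally show ?thesis .
qed

lemma mem_ar_boxes_iff:
  "sb \<in> set (ar_boxes k) \<longleftrightarrow> (\<exists>x. sb = (True, (x, rowlen k x + 1)) \<and> addable_row k x) \<or>
    (\<exists>x. sb = (False, (x, rowlen k x)) \<and> removable_row k x)"
proof -
  have "sb \<in> set (ar_boxes k) \<longleftrightarrow> (\<exists>x. 1 \<le> x \<and> x < length k + 2 \<and> sb \<in> set (row_entries k x))"
    unfolding ar_boxes_eq_row_entries by (auto simp del: upt_Suc)
  then show ?thesis
    unfolding row_entries_def add_entry_def rem_entry_def
    by (auto simp: addable_row_def removable_row_def split: if_splits)
qed

lemma True_mem_ar_boxes_iff:
  "(True, b) \<in> set (ar_boxes k) \<longleftrightarrow> (\<exists>x. b = (x, rowlen k x + 1) \<and> addable_row k x)"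
  using mem_ar_boxes_iff by auto

lemma False_mem_ar_boxes_iff:
  "(False, b) \<in> set (ar_boxes k) \<longleftrightarrow> (\<exists>x. b = (x, rowlen k x) \<and> removable_row k x)"
  using mem_ar_boxes_iff by auto

definition content_greater :: "bool \<times> (nat \<times> nat) \<Rightarrow> bool \<times> (nat \<times> nat) \<Rightarrow> bool" where
  "content_greater a b \<longleftrightarrow> content (snd b) < content (snd a)"

lemma row_entries_content_greater:
  assumes "is_partition k" "1 \<le> y" "y < y'" "a \<in> set (row_entries k y)" "b \<in> set (row_entries k y')"
  shows "content_greater a b"
proof -
  have "rowlen k y' \<le> rowlen k (y + 1)"
    using rowlen_antimono[OF assms(1), of "y + 1" y'] assms by simp
  then have "content (snd b) \<le> int (rowlen k (y + 1)) - int y"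
    using assms(5,3)
    by (auto simp: row_entries_def add_entry_def rem_entry_def content_def split: if_splits)
  moreover have "rowlen k (y + 1) \<le> rowlen k y" using rowlen_antimono[OF assms(1,2)] by simp
  then have "int (rowlen k (y + 1)) - int y < content (snd a)"
    using assms(4) by (auto simp: row_entries_def add_entry_def rem_entry_def content_def
        removable_row_iff split: if_splits)
  ultimately show ?thesis by (simp add: content_greater_def)
qed

lemma sorted_row_entries: "sorted_wrt content_greater (row_entries k y)"
  by (simp add: row_entries_def add_entry_def rem_entry_def content_greater_def content_def)

lemma sorted_concat_row_entries:
  assumes "is_partition k"
  shows "sorted_wrt content_greater (concat (map (row_entries k) [1..<M]))"
proof (induction M)
  case 0 then show ?case by simp
next
  case (Suc M)
  show ?case
  proof (cases "1 \<le> M")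
    case True
    then have "concat (map (row_entries k) [1..<Suc M]) =
        concat (map (row_entries k) [1..<M]) @ row_entries k M" by simp
    moreover have "\<forall>a\<in>set (concat (map (row_entries k) [1..<M])). \<forall>b\<in>set (row_entries k M).
        content_greater a b"
      using row_entries_content_greater[OF assms] by (auto simp del: upt_Suc)
    ultimately show ?thesis using Suc sorted_row_entries[of k M]
      by (simp add: sorted_wrt_append del: upt_Suc)
  next
    case False then show ?thesis by simp
  qed
qed

lemma sorted_ar_boxes: "is_partition k \<Longrightarrow> sorted_wrt content_greater (ar_boxes k)"
  unfolding ar_boxes_eq_row_entries by (rule sorted_concat_row_entries)

lemma sorted_content_greater_distinct: "sorted_wrt content_greater xs \<Longrightarrow> distinct xs"
  by (induction xs) (auto simp: content_greater_def)

lemma distinct_ar_boxes: "is_partition k \<Longrightarrow> distinct (ar_boxes k)"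
  using sorted_ar_boxes sorted_content_greater_distinct by blast

definition of_residue :: "nat \<Rightarrow> int \<Rightarrow> (bool \<times> (nat \<times> nat)) \<Rightarrow> bool" where
  "of_residue e i sb \<longleftrightarrow> content (snd sb) mod int e = i mod int e"

lemma isig_eq_filter:
  assumes p: "is_partition k"
  shows "isig e i k = filter (of_residue e i) (ar_boxes k)"
proof -
  have "sorted_wrt content_greater (filter (of_residue e i) (ar_boxes k))"
    using sorted_ar_boxes[OF p] by (simp add: sorted_wrt_filter)
  then have "sorted_wrt (\<lambda>a b. - content (snd a) \<le> - content (snd b))
      (filter (of_residue e i) (ar_boxes k))"
    by (rule sorted_wrt_mono_rel[rotated]) (auto simp: content_greater_def)
  then have "sorted (map (\<lambda>sb. - content (snd sb)) (filter (of_residue e i) (ar_boxes k)))"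
    by (simp add: sorted_wrt_map)
  then show ?thesis unfolding isig_def of_residue_def[abs_def]
    by (simp add: sort_key_id_if_sorted)
qed

lemma distinct_isig: "is_partition k \<Longrightarrow> distinct (isig e i k)"
  using distinct_ar_boxes by (simp add: isig_eq_filter)

lemma isig_eq_gap_entries: "is_partition k \<Longrightarrow> length k + 1 \<le> M \<Longrightarrow>
   isig e i k = concat (map (\<lambda>y. filter (of_residue e i) (gap_entries k y)) [0..<M])"
  by (simp add: isig_eq_filter ar_boxes_eq_gap_entries filter_concat comp_def)

lemma isig_eq_row_entries: "is_partition k \<Longrightarrow> length k + 2 \<le> M \<Longrightarrow>
   isig e i k = concat (map (\<lambda>y. filter (of_residue e i) (row_entries k y)) [1..<M])"
  by (simp add: isig_eq_filter ar_boxes_eq_row_entries_upt filter_concat comp_def)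

lemma of_residue_iff_dvd: "of_residue e i (s, (x, y)) \<longleftrightarrow> int e dvd int y - int x - i"
  by (simp add: of_residue_def content_def mod_eq_dvd_iff)

lemma of_residue_add_dvd_iff:
  assumes "e dvd c"
  shows "of_residue e i (s, (x, c + t)) \<longleftrightarrow> int e dvd int t - int x - i"
proof -
  have "int e dvd int c" using assms by simp
  moreover have "int (c + t) - int x - i = int c + (int t - int x - i)" by simp
  ultimately show ?thesis by (simp only: of_residue_iff_dvd dvd_add_right_iff)
qed

lemma of_residue_neighbour:
  assumes "1 < e" "of_residue e i a"
    and "content (snd a') = content (snd a) + 1 \<or> content (snd a') = content (snd a) - 1"
  shows "\<not> of_residue e i a'"
proof
  assume "of_residue e i a'"
  with assms(2) have "content (snd a') mod int e = content (snd a) mod int e"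
    by (simp add: of_residue_def)
  then have "int e dvd content (snd a') - content (snd a)" by (simp only: mod_eq_dvd_iff)
  then have "int e dvd 1" using assms(3) by auto
  then show False using assms(1) by simp
qed

lemma gap_entries_0: "gap_entries k 0 = [(True, (1, rowlen k 1 + 1))]"
  by (simp add: gap_entries_def rem_entry_def add_entry_def removable_row_iff addable_row_iff)

lemma gap_entries_pos:
  "1 \<le> y \<Longrightarrow> gap_entries k y = (if rowlen k (y + 1) < rowlen k y
     then [(False, (y, rowlen k y)), (True, (y + 1, rowlen k (y + 1) + 1))] else [])"
  by (simp add: gap_entries_def rem_entry_def add_entry_def removable_row_iff addable_row_iff)

lemma cancelling_block_gap_entries:
  assumes "1 \<le> y"
    and "of_residue e i (False, (y, rowlen k y)) \<longleftrightarrow>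
      of_residue e i (True, (y + 1, rowlen k (y + 1) + 1))"
  shows "cancelling_block False (filter (of_residue e i) (gap_entries k y))"
  using assms by (simp add: gap_entries_pos cancelling_block_def)

lemma rowlen_add_box:
  assumes "1 \<le> x" "x \<le> length k + 1"
  shows "rowlen (add_box k (x, c)) y = rowlen k y + (if y = x then 1 else 0)"
proof (cases "x = length k + 1")
  case True
  then show ?thesis unfolding add_box_def rowlen_def by (auto simp: nth_append)
next
  case False
  then show ?thesis using assms unfolding add_box_def rowlen_def by auto
qed

lemma length_add_box:
  assumes "1 \<le> x" "x \<le> length k + 1"
  shows "length (add_box k (x, c)) = (if x = length k + 1 then length k + 1 else length k)"
  unfolding add_box_def by auto

lemma add_box_partition:
  assumes p: "is_partition k" and a: "addable_row k x"
  shows "is_partition (add_box k (x, c))"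
proof -
  have x: "1 \<le> x" "x \<le> length k + 1" using a by (auto simp: addable_row_def)
  note rl = rowlen_add_box[OF x, of c]
  show ?thesis
  proof (rule is_partitionI)
    fix y :: nat assume y: "1 \<le> y"
    show "rowlen (add_box k (x, c)) (y + 1) \<le> rowlen (add_box k (x, c)) y"
    proof (cases "y + 1 = x")
      case True
      then have "rowlen k x < rowlen k y" using a y by (auto simp: addable_row_iff)
      then show ?thesis using True rl by simp
    next
      case False
      then show ?thesis using rowlen_antimono[OF p y, of "y + 1"] rl by auto
    qed
  next
    fix y :: nat assume y: "1 \<le> y" "y \<le> length (add_box k (x, c))"
    show "0 < rowlen (add_box k (x, c)) y"
    proof (cases "y \<le> length k")
      case True then show ?thesis using rowlen_pos[OF p y(1) True] rl by simp
    next
      case False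
      then have "y = x" using y length_add_box[OF x, of c] by (auto split: if_splits)
      then show ?thesis using rl by simp
    qed
  qed
qed


lemma row_entries_add_box_other:
  assumes p: "is_partition k" and e: "1 < e" and a: "addable_row k x"
    and r: "of_residue e i (True, (x, rowlen k x + 1))" and y: "1 \<le> y" "y \<noteq> x"
  shows "filter (of_residue e i) (row_entries (add_box k (x, c)) y) =
    filter (of_residue e i) (row_entries k y)"
proof -
  have x: "1 \<le> x" "x \<le> length k + 1" using a by (auto simp: addable_row_def)
  define k' where "k' = add_box k (x, c)"
  have rl: "rowlen k' z = rowlen k z + (if z = x then 1 else 0)" for z
    unfolding k'_def by (rule rowlen_add_box[OF x])
  have same_len: "rowlen k' y = rowlen k y" using rl y by simp
  have "filter (of_residue e i) (add_entry k' y) = filter (of_residue e i) (add_entry k y)"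
  proof (cases "y = x + 1 \<and> rowlen k y = rowlen k x")
    case True
    then have "content (y, rowlen k y + 1) = content (x, rowlen k x + 1) - 1"
      by (auto simp: content_def)
    then have "\<not> of_residue e i (True, (y, rowlen k y + 1))"
      using of_residue_neighbour[OF e r, of "(True, (y, rowlen k y + 1))"] by simp
    then show ?thesis by (simp add: add_entry_def same_len)
  next
    case False
    have "rowlen k' (y - 1) = rowlen k (y - 1) + (if y = x + 1 then 1 else 0)"
      using rl y x by auto
    moreover have "y = x + 1 \<Longrightarrow> rowlen k y < rowlen k x"
      using False rowlen_antimono[OF p x(1), of y] by fastforce
    ultimately have "addable_row k' y = addable_row k y"
      using same_len by (auto simp: addable_row_iff)
    then show ?thesis by (simp add: add_entry_def same_len)
  qed
  moreover have "filter (of_residue e i) (rem_entry k' y) = filter (of_residue e i) (rem_entry k y)"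
  proof (cases "y + 1 = x \<and> rowlen k y = rowlen k x + 1")
    case True
    then have "content (y, rowlen k y) = content (x, rowlen k x + 1) + 1"
      by (auto simp: content_def)
    then have "\<not> of_residue e i (False, (y, rowlen k y))"
      using of_residue_neighbour[OF e r, of "(False, (y, rowlen k y))"] by simp
    then show ?thesis by (simp add: rem_entry_def same_len)
  next
    case False
    have "y + 1 = x \<Longrightarrow> rowlen k x + 1 < rowlen k y"
      using False a y by (auto simp: addable_row_iff)
    then have "removable_row k' y = removable_row k y"
      using rl[of "y + 1"] same_len y by (auto simp: removable_row_iff)
    then show ?thesis by (simp add: rem_entry_def same_len)
  qed
  ultimately show ?thesis by (simp add: row_entries_def k'_def)
qed

lemma filter_row_entries_add_box:
  assumes p: "is_partition k" and e: "1 < e" and a: "addable_row k x"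
    and r: "of_residue e i (True, (x, rowlen k x + 1))"
  shows "filter (of_residue e i) (row_entries k x) = [(True, (x, rowlen k x + 1))]"
    and "filter (of_residue e i) (row_entries (add_box k (x, c)) x) =
      [(False, (x, rowlen k x + 1))]"
proof -
  have x: "1 \<le> x" "x \<le> length k + 1" using a by (auto simp: addable_row_def)
  define k' where "k' = add_box k (x, c)"
  have rl: "rowlen k' z = rowlen k z + (if z = x then 1 else 0)" for z
    unfolding k'_def by (rule rowlen_add_box[OF x])
  have "\<not> of_residue e i (False, (x, rowlen k x))"
    using of_residue_neighbour[OF e r, of "(False, (x, rowlen k x))"] by (simp add: content_def)
  then show "filter (of_residue e i) (row_entries k x) = [(True, (x, rowlen k x + 1))]"
    using a r by (simp add: row_entries_def add_entry_def rem_entry_def)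
  have "\<not> of_residue e i (True, (x, rowlen k' x + 1))"
    using of_residue_neighbour[OF e r, of "(True, (x, rowlen k' x + 1))"] rl
    by (simp add: content_def)
  moreover have "removable_row k' x"
    using rowlen_antimono[OF p x(1), of "x + 1"] rl x by (simp add: removable_row_iff)
  ultimately show "filter (of_residue e i) (row_entries k' x) = [(False, (x, rowlen k x + 1))]"
    using r rl by (simp add: row_entries_def add_entry_def rem_entry_def of_residue_def)
qed

text \<open>Besides the added box, only boxes of residue \<open>i \<pm> 1\<close> change their status.\<close>

lemma isig_add_box:
  assumes p: "is_partition k" and e: "1 < e" and sig: "isig e i k = A @ (True, b) # B"
  shows "isig e i (add_box k b) = A @ (False, b) # B"
proof -
  have "(True, b) \<in> set (ar_boxes k)" and r: "of_residue e i (True, b)"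
  proof -
    have "(True, b) \<in> set (isig e i k)" using sig by simp
    then show "(True, b) \<in> set (ar_boxes k)" "of_residue e i (True, b)"
      by (simp_all add: isig_eq_filter[OF p])
  qed
  then obtain x where b: "b = (x, rowlen k x + 1)" and a: "addable_row k x"
    using True_mem_ar_boxes_iff by blast
  have x: "1 \<le> x" "x \<le> length k + 1" using a by (auto simp: addable_row_def)
  define k' where "k' = add_box k b"
  have p': "is_partition k'" unfolding k'_def b by (rule add_box_partition[OF p a])
  define fr where "fr = (\<lambda>k y. filter (of_residue e i) (row_entries k y))"
  have fr_x: "fr k x = [(True, b)]" "fr k' x = [(False, b)]"
    using filter_row_entries_add_box[OF p e a r[unfolded b]] by (simp_all add: fr_def k'_def b)
  have fr_other: "fr k' y = fr k y" if "1 \<le> y" "y \<noteq> x" for y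
    using row_entries_add_box_other[OF p e a r[unfolded b] that] by (simp add: fr_def k'_def b)
  define M where "M = length k + 3"
  have "length k' \<le> length k + 1" unfolding k'_def b using length_add_box[OF x] by simp
  then have M: "length k + 2 \<le> M" "length k' + 2 \<le> M" by (auto simp: M_def)
  have split: "[1..<M] = [1..<x] @ x # [x + 1..<M]" using upt_split_at[of 1 x M] x M by simp
  define A' where "A' = concat (map (fr k) [1..<x])"
  define B' where "B' = concat (map (fr k) [x + 1..<M])"
  have sig_rows:
    "isig e i l = concat (map (fr l) [1..<x]) @ fr l x @ concat (map (fr l) [x + 1..<M])"
    if "is_partition l" "length l + 2 \<le> M" for l
    using isig_eq_row_entries[OF that, of e i] split by (simp add: fr_def)
  have "A @ (True, b) # B = A' @ (True, b) # B'"
    using sig sig_rows[OF p M(1)] fr_x by (simp add: A'_def B'_def)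
  moreover have "(True, b) \<notin> set A" "(True, b) \<notin> set B"
    using sig distinct_isig[OF p, of e i] by simp_all
  ultimately have "A = A' \<and> B = B'" using append_Cons_eq_iff[of "(True, b)" A B A' B'] by simp
  moreover have "isig e i k' = A' @ (False, b) # B'"
  proof -
    have "concat (map (fr k') [1..<x]) = A'" "concat (map (fr k') [x + 1..<M]) = B'"
      unfolding A'_def B'_def using fr_other x by (intro arg_cong[where f=concat] map_cong; simp)+
    then show ?thesis using sig_rows[OF p' M(2)] fr_x by simp
  qed
  ultimately show ?thesis by (simp add: k'_def)
qed

section \<open>Signatures made of single pluses and cancelling pairs\<close>

lemma opow_Suc_first: "opow F (Suc m) x = Option.bind (F x) (opow F m)"
proof (induction m arbitrary: x)
  case 0
  have "opow F 0 = Some" by (rule ext) simp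
  then show ?case by simp
next
  case (Suc m)
  have "opow F (Suc m) = (\<lambda>y. Option.bind (opow F m y) F)" by (rule ext) simp
  then show ?case using Suc.IH by simp
qed

text \<open>Read gap by gap (the removable box of row \<open>y\<close>, then the addable box of row \<open>y + 1\<close>), the
  \<open>i\<close>-signature of \<open>k\<close> is the single \<open>+\<close> of the addable box of row \<open>y + 1\<close> if
  \<open>y + 1 \<in> T\<close>, and a cancelling \<open>-+\<close> or nothing otherwise. Then \<open>\<sigma>\<^sub>i\<close> adds one box to each
  row of \<open>T\<close>.\<close>

locale single_plus_signature =
  fixes e :: nat and i :: int and k :: "nat list" and M :: nat and T :: "nat set"
  assumes partition: "is_partition k" and e: "1 < e" and M: "length k + 1 \<le> M"
    and T: "T \<subseteq> {1..M}"
    and first_row: "1 \<in> T \<longleftrightarrow> of_residue e i (True, (1, rowlen k 1 + 1))"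
    and plus_row: "\<And>y. 1 \<le> y \<Longrightarrow> y + 1 \<in> T \<Longrightarrow> rowlen k (y + 1) < rowlen k y \<and>
      of_residue e i (True, (y + 1, rowlen k (y + 1) + 1)) \<and>
      \<not> of_residue e i (False, (y, rowlen k y))"
    and other_row: "\<And>y. 1 \<le> y \<Longrightarrow> y + 1 \<notin> T \<Longrightarrow>
      of_residue e i (False, (y, rowlen k y)) \<longleftrightarrow>
      of_residue e i (True, (y + 1, rowlen k (y + 1) + 1))"
begin

lemma plus_gap:
  "y + 1 \<in> T \<Longrightarrow>
    filter (of_residue e i) (gap_entries k y) = [(True, (y + 1, rowlen k (y + 1) + 1))]"
  using first_row plus_row[of y] by (cases "y = 0") (auto simp: gap_entries_0 gap_entries_pos)

lemma block_gap: "y + 1 \<notin> T \<Longrightarrow> cancelling_block False (filter (of_residue e i) (gap_entries k y))"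
  using first_row other_row[of y] cancelling_block_gap_entries[of y e i k]
  by (cases "y = 0") (auto simp: gap_entries_0 cancelling_block_def)

definition box :: "nat \<Rightarrow> nat \<times> nat" where
  "box t = (t, rowlen k t + 1)"

definition gap_word :: "nat \<Rightarrow> nat \<Rightarrow> (bool \<times> (nat \<times> nat)) list" where
  "gap_word \<theta> y = (if y + 1 \<in> T then [(y + 1 \<le> \<theta>, box (y + 1))]
                   else filter (of_residue e i) (gap_entries k y))"

definition word :: "nat \<Rightarrow> (bool \<times> (nat \<times> nat)) list" where
  "word \<theta> = concat (map (gap_word \<theta>) [0..<M])"

text \<open>\<open>f\<^sub>i\<close> extends the rows of \<open>T\<close> from the bottom up; \<open>filled_beyond \<theta> l\<close> says that
  \<open>l\<close> is \<open>k\<close> with the rows of \<open>T\<close> below row \<open>\<theta>\<close> extended, whose signature is \<open>word \<theta>\<close>.\<close>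

definition filled_beyond :: "nat \<Rightarrow> nat list \<Rightarrow> bool" where
  "filled_beyond \<theta> l \<longleftrightarrow> is_partition l \<and> isig e i l = word \<theta> \<and>
     (\<forall>x. rowlen l x = rowlen k x + (if x \<in> T \<and> \<theta> < x then 1 else 0))"

lemma filled_beyond_M: "filled_beyond M k"
proof -
  have "isig e i k = concat (map (gap_word M) [0..<M])"
    unfolding isig_eq_gap_entries[OF partition M] using plus_gap T
    by (intro arg_cong[where f = concat] map_cong) (auto simp: gap_word_def box_def)
  then show ?thesis using partition T by (auto simp: filled_beyond_def word_def)
qed

lemma reduce_word:
  "reduce False (word \<theta>) = map (\<lambda>t. (t \<le> \<theta>, box t)) (filter (\<lambda>t. t \<in> T) [1..<M + 1])"
proof -
  have "map (\<lambda>y. if cancelling_block False (gap_word \<theta> y) then [] else gap_word \<theta> y) [0..<M] =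
      map (\<lambda>y. if y + 1 \<in> T then [(y + 1 \<le> \<theta>, box (y + 1))] else []) [0..<M]"
    using block_gap by (auto simp: gap_word_def cancelling_block_def)
  then have "stack_reduce False (word \<theta>) =
      stack_reduce False (map (\<lambda>t. (t \<le> \<theta>, box t)) (filter (\<lambda>t. t \<in> T) [1..<M + 1]))"
    unfolding stack_reduce_def word_def
      foldl_stack_step_cancelling_blocks[of False _ "gap_word \<theta>"]
    by (simp only: concat_map_singletons[of "\<lambda>t. t \<in> T" "\<lambda>t. (t \<le> \<theta>, box t)"])
  also have "\<dots> = map (\<lambda>t. (t \<le> \<theta>, box t)) (filter (\<lambda>t. t \<in> T) [1..<M + 1])"
  proof (intro stack_reduce_pair_free pair_free_False_if_sorted)
    have "sorted_wrt (<) (filter (\<lambda>t. t \<in> T) [1..<M + 1])"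
      by (intro sorted_wrt_filter) (simp del: upt_Suc)
    then show "sorted_wrt (\<lambda>a b. fst b \<longrightarrow> fst a)
        (map (\<lambda>t. (t \<le> \<theta>, box t)) (filter (\<lambda>t. t \<in> T) [1..<M + 1]))"
      unfolding sorted_wrt_map by (rule sorted_wrt_mono_rel[rotated]) simp
  qed
  finally show ?thesis by (simp add: reduce_eq_stack_reduce)
qed

lemma Iplus_Iminus_filled_beyond:
  assumes "filled_beyond \<theta> l"
  shows "Iplus e i l = map box (filter (\<lambda>t. t \<in> T \<and> t \<le> \<theta>) [1..<M + 1])"
    and "Iminus e i l = map box (filter (\<lambda>t. t \<in> T \<and> \<theta> < t) [1..<M + 1])"
  using assms reduce_word[of \<theta>]
  by (simp_all add: filled_beyond_def Iplus_def Iminus_def filter_map comp_def not_le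
      del: upt_Suc)

lemma filled_beyond_Suc_notin:
  assumes "Suc \<theta> \<notin> T"
  shows "filled_beyond (Suc \<theta>) l \<longleftrightarrow> filled_beyond \<theta> l"
proof -
  have "x \<in> T \<Longrightarrow> (x \<le> Suc \<theta>) = (x \<le> \<theta>)" for x
    using assms by (cases "x = Suc \<theta>") auto
  then have "word (Suc \<theta>) = word \<theta>"
    unfolding word_def gap_word_def by (intro arg_cong[where f = concat] map_cong) auto
  moreover have "(x \<in> T \<and> Suc \<theta> < x) \<longleftrightarrow> (x \<in> T \<and> \<theta> < x)" for x
    using assms by (cases "x = Suc \<theta>") auto
  ultimately show ?thesis by (simp add: filled_beyond_def)
qed

lemma word_split_at:
  assumes t: "Suc \<theta> \<in> T"
  obtains P Q where "word (Suc \<theta>) = P @ (True, box (Suc \<theta>)) # Q"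
    and "word \<theta> = P @ (False, box (Suc \<theta>)) # Q"
proof -
  have "[0..<M] = [0..<\<theta>] @ \<theta> # [Suc \<theta>..<M]" using upt_split_at t T by auto
  then have split: "word \<theta>' = concat (map (gap_word \<theta>') [0..<\<theta>]) @ gap_word \<theta>' \<theta> @
      concat (map (gap_word \<theta>') [Suc \<theta>..<M])" for \<theta>'
    unfolding word_def by simp
  have "gap_word (Suc \<theta>) y = gap_word \<theta> y" if "y \<noteq> \<theta>" for y
    using that by (auto simp: gap_word_def)
  then have "concat (map (gap_word (Suc \<theta>)) [0..<\<theta>]) = concat (map (gap_word \<theta>) [0..<\<theta>])"
    "concat (map (gap_word (Suc \<theta>)) [Suc \<theta>..<M]) = concat (map (gap_word \<theta>) [Suc \<theta>..<M])"
    by (intro arg_cong[where f = concat] map_cong; simp)+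
  moreover have "gap_word (Suc \<theta>) \<theta> = [(True, box (Suc \<theta>))]"
    "gap_word \<theta> \<theta> = [(False, box (Suc \<theta>))]"
    using t by (simp_all add: gap_word_def)
  ultimately show ?thesis using that split by simp
qed

lemma f_op_filled_beyond:
  assumes l: "filled_beyond (Suc \<theta>) l" and t: "Suc \<theta> \<in> T"
  shows "f_op e i l = Some (add_box l (box (Suc \<theta>)))"
    and "filled_beyond \<theta> (add_box l (box (Suc \<theta>)))"
proof -
  have tM: "Suc \<theta> \<le> M" using t T by auto
  have "filter (\<lambda>t. t \<in> T \<and> t \<le> Suc \<theta>) [1..<M + 1] =
      filter (\<lambda>t. t \<in> T \<and> t \<le> Suc \<theta>) [1..<Suc \<theta>] @ [Suc \<theta>]"
    using upt_split_at[of 1 "Suc \<theta>" "M + 1"] tM t by (simp add: filter_empty_conv del: upt_Suc)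
  then show "f_op e i l = Some (add_box l (box (Suc \<theta>)))"
    using Iplus_Iminus_filled_beyond(1)[OF l] by (simp add: f_op_def del: upt_Suc)
  have p: "is_partition l" and sig: "isig e i l = word (Suc \<theta>)"
    and rl: "\<And>x. rowlen l x = rowlen k x + (if x \<in> T \<and> Suc \<theta> < x then 1 else 0)"
    using l by (auto simp: filled_beyond_def)
  obtain P Q where sig': "isig e i l = P @ (True, box (Suc \<theta>)) # Q"
    and word_\<theta>: "word \<theta> = P @ (False, box (Suc \<theta>)) # Q"
    using word_split_at[OF t] sig by metis
  from sig' have sig_add: "isig e i (add_box l (box (Suc \<theta>))) = word \<theta>"
    unfolding word_\<theta> by (rule isig_add_box[OF p e])
  have "(True, box (Suc \<theta>)) \<in> set (isig e i l)" using sig' by simp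
  then have "(True, box (Suc \<theta>)) \<in> set (ar_boxes l)" by (simp add: isig_eq_filter[OF p])
  then have a: "addable_row l (Suc \<theta>)" and b: "box (Suc \<theta>) = (Suc \<theta>, rowlen l (Suc \<theta>) + 1)"
    using rl by (auto simp: True_mem_ar_boxes_iff box_def)
  have "1 \<le> Suc \<theta>" "Suc \<theta> \<le> length l + 1" using a by (auto simp: addable_row_def)
  note rl_add = rowlen_add_box[OF this, of "rowlen l (Suc \<theta>) + 1"]
  show "filled_beyond \<theta> (add_box l (box (Suc \<theta>)))"
    unfolding filled_beyond_def b
    using add_box_partition[OF p a] sig_add rl_add rl t b by auto
qed

lemma opow_f_op_filled_beyond:
  "\<theta> \<le> M \<Longrightarrow> filled_beyond \<theta> l \<Longrightarrow>
    \<exists>l'. opow (f_op e i) (length (filter (\<lambda>t. t \<in> T) [1..<\<theta> + 1])) l = Some l' \<and>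
      filled_beyond 0 l'"
proof (induction \<theta> arbitrary: l)
  case (Suc \<theta>)
  show ?case
  proof (cases "Suc \<theta> \<in> T")
    case True
    define m where "m = length (filter (\<lambda>t. t \<in> T) [1..<\<theta> + 1])"
    obtain l' where "opow (f_op e i) m (add_box l (box (Suc \<theta>))) = Some l'" "filled_beyond 0 l'"
      using Suc.IH Suc.prems f_op_filled_beyond(2)[OF Suc.prems(2) True] by (auto simp: m_def)
    then have "opow (f_op e i) (Suc m) l = Some l'"
      using f_op_filled_beyond(1)[OF Suc.prems(2) True] by (simp only: opow_Suc_first) simp
    moreover have "length (filter (\<lambda>t. t \<in> T) [1..<Suc \<theta> + 1]) = Suc m"
      using True by (simp add: m_def)
    ultimately show ?thesis using \<open>filled_beyond 0 l'\<close> by auto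
  next
    case False
    then show ?thesis using Suc.IH Suc.prems by (simp add: filled_beyond_Suc_notin)
  qed
qed simp

theorem sigma_extends_rows:
  "\<exists>k'. sigma e i k = Some k' \<and> is_partition k' \<and>
    (\<forall>x. rowlen k' x = rowlen k x + (if x \<in> T then 1 else 0))"
proof -
  have in_range: "filter (\<lambda>t. t \<in> T \<and> t \<le> M) [1..<M + 1] = filter (\<lambda>t. t \<in> T) [1..<M + 1]"
    by (rule filter_cong) auto
  obtain k' where k': "opow (f_op e i) (length (filter (\<lambda>t. t \<in> T) [1..<M + 1])) k = Some k'"
    "filled_beyond 0 k'"
    using opow_f_op_filled_beyond[OF order.refl filled_beyond_M] by blast
  have "Iminus e i k = []"
    using Iplus_Iminus_filled_beyond(2)[OF filled_beyond_M] T by (auto simp: filter_empty_conv)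
  moreover have "length (Iplus e i k) = length (filter (\<lambda>t. t \<in> T) [1..<M + 1])"
    using Iplus_Iminus_filled_beyond(1)[OF filled_beyond_M] in_range by simp
  moreover have "x \<in> T \<Longrightarrow> 0 < x" for x using T by auto
  ultimately show ?thesis using k' by (auto simp: sigma_def filled_beyond_def)
qed

end

lemma Iplus_mem_ar_boxes:
  "is_partition l \<Longrightarrow> b \<in> set (Iplus e i l) \<Longrightarrow> (True, b) \<in> set (ar_boxes l)"
  using set_reduce_subset[of False "isig e i l"] by (auto simp: Iplus_def isig_eq_filter)

lemma is_partition_f_op:
  assumes p: "is_partition l" and f: "f_op e i l = Some l'"
  shows "is_partition l'"
proof -
  have "Iplus e i l \<noteq> []" and l': "l' = add_box l (last (Iplus e i l))"
    using f by (auto simp: f_op_def split: if_splits)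
  then have "(True, last (Iplus e i l)) \<in> set (ar_boxes l)"
    by (intro Iplus_mem_ar_boxes[OF p, of _ e i] last_in_set)
  then obtain x where "last (Iplus e i l) = (x, rowlen l x + 1)" "addable_row l x"
    using True_mem_ar_boxes_iff by blast
  then show ?thesis using add_box_partition[OF p] l' by simp
qed

lemma is_partition_opow_f_op:
  "is_partition l \<Longrightarrow> opow (f_op e i) m l = Some l' \<Longrightarrow> is_partition l'"
  by (induction m arbitrary: l') (auto simp: bind_eq_Some_conv intro: is_partition_f_op)

lemma is_partition_sigma: "is_partition l \<Longrightarrow> sigma e i l = Some l' \<Longrightarrow> is_partition l'"
  unfolding sigma_def by (auto split: if_splits intro: is_partition_opow_f_op)

definition sigma_chain :: "nat \<Rightarrow> (nat \<Rightarrow> int) \<Rightarrow> nat \<Rightarrow> nat list \<Rightarrow> nat list option" where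
  "sigma_chain e r n l = fold (\<lambda>k acc. Option.bind acc (sigma e (r k))) [0..<n] (Some l)"

lemma sigma_chain_0 [simp]: "sigma_chain e r 0 l = Some l"
  by (simp add: sigma_chain_def)

lemma sigma_chain_Suc:
  "sigma_chain e r (Suc n) l = Option.bind (sigma_chain e r n l) (sigma e (r n))"
  by (simp add: sigma_chain_def)

lemma is_partition_sigma_chain:
  "is_partition l \<Longrightarrow> sigma_chain e r n l = Some l' \<Longrightarrow> is_partition l'"
  by (induction n arbitrary: l')
    (auto simp: sigma_chain_Suc bind_eq_Some_conv intro: is_partition_sigma)

lemma C0_eq_sigma_chain: "C0 e n l = sigma_chain e (\<lambda>k. - int k) n l"
  by (simp add: C0_def sigma_chain_def)

lemma sigma_chain_single_plus:
  assumes l: "is_partition l"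
    and step: "\<And>m l'. m < n \<Longrightarrow> is_partition l' \<Longrightarrow>
      (\<And>x. 1 \<le> x \<Longrightarrow> rowlen l' x = rowlen l x + a m x) \<Longrightarrow>
      single_plus_signature e (r m) l' (length l' + m + 2) (T m)"
    and a0: "\<And>x. 1 \<le> x \<Longrightarrow> a 0 x = 0"
    and a_Suc: "\<And>m x. 1 \<le> x \<Longrightarrow> a (Suc m) x = a m x + (if x \<in> T m then 1 else 0)"
  shows "\<exists>l'. sigma_chain e r n l = Some l' \<and> is_partition l' \<and>
    (\<forall>x. 1 \<le> x \<longrightarrow> rowlen l' x = rowlen l x + a n x)"
proof -
  have "\<exists>l'. sigma_chain e r m l = Some l' \<and> is_partition l' \<and>
      (\<forall>x. 1 \<le> x \<longrightarrow> rowlen l' x = rowlen l x + a m x)" if "m \<le> n" for m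
    using that
  proof (induction m)
    case (Suc m)
    then obtain l' where l': "sigma_chain e r m l = Some l'" "is_partition l'"
      "\<And>x. 1 \<le> x \<Longrightarrow> rowlen l' x = rowlen l x + a m x"
      by auto
    interpret single_plus_signature e "r m" l' "length l' + m + 2" "T m"
      using step Suc.prems l' by simp
    obtain l'' where "sigma e (r m) l' = Some l''" "is_partition l''"
      "\<And>x. rowlen l'' x = rowlen l' x + (if x \<in> T m then 1 else 0)"
      using sigma_extends_rows by blast
    then show ?case using l' a_Suc by (auto simp: sigma_chain_Suc)
  qed (use l a0 in simp)
  then show ?thesis by simp
qed

section \<open>Conjugation\<close>

lemma foldr_max_ge: "v \<in> set k \<Longrightarrow> v \<le> foldr max k (0::nat)"
  by (induction k) auto

lemma foldr_max_mem: "foldr max k (0::nat) = 0 \<or> foldr max k 0 \<in> set k"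
  by (induction k) (auto simp: max_def)

lemma rowlen_ptranspose: "1 \<le> y \<Longrightarrow> rowlen (ptranspose k) y = length (filter (\<lambda>v. y \<le> v) k)"
proof -
  assume y: "1 \<le> y"
  show ?thesis
  proof (cases "y \<le> foldr max k 0")
    case True
    then have "[1..<foldr max k 0 + 1] ! (y - 1) = y" using y by (simp add: nth_upt del: upt_Suc)
    then show ?thesis using y True unfolding rowlen_def ptranspose_def by (simp del: upt_Suc)
  next
    case False
    then have "filter (\<lambda>v. y \<le> v) k = []"
      using foldr_max_ge[of _ k] by (force simp: filter_empty_conv)
    then show ?thesis using False unfolding rowlen_def ptranspose_def by simp
  qed
qed

lemma length_ptranspose: "length (ptranspose k) = foldr max k 0"
  by (simp add: ptranspose_def)

lemma is_partition_ptranspose: "is_partition (ptranspose k)"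
proof (rule is_partitionI)
  fix y :: nat assume y: "1 \<le> y"
  show "rowlen (ptranspose k) (y + 1) \<le> rowlen (ptranspose k) y"
  proof -
    have "length (filter (\<lambda>v. y + 1 \<le> v) k) \<le> length (filter (\<lambda>v. y \<le> v) k)"
      by (induction k) auto
    then show ?thesis using y by (simp add: rowlen_ptranspose)
  qed
next
  fix y :: nat assume y: "1 \<le> y" "y \<le> length (ptranspose k)"
  then have "foldr max k 0 \<in> set k" using foldr_max_mem[of k] by (auto simp: length_ptranspose)
  moreover have "y \<le> foldr max k 0" using y by (simp add: length_ptranspose)
  ultimately have "filter (\<lambda>v. y \<le> v) k \<noteq> []" by (auto simp: filter_empty_conv)
  then show "0 < rowlen (ptranspose k) y" using y by (simp add: rowlen_ptranspose)
qed

lemma le_rowlen_iff_length_filter: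
  assumes "is_partition k" "1 \<le> x" "1 \<le> y"
  shows "y \<le> rowlen k x \<longleftrightarrow> x \<le> length (filter (\<lambda>v. y \<le> v) k)"
  using assms
proof (induction k arbitrary: x)
  case Nil then show ?case by (simp add: rowlen_def)
next
  case (Cons a k)
  have pk: "is_partition k" using Cons.prems(1) by (simp add: is_partition_def)
  have ak: "\<And>v. v \<in> set k \<Longrightarrow> v \<le> a" using Cons.prems(1) by (simp add: is_partition_def)
  have Rc: "rowlen (a # k) x = (if x = 1 then a else rowlen k (x - 1))"
    using Cons.prems(2) by (auto simp: rowlen_def nth_Cons')
  show ?case
  proof (cases "y \<le> a")
    case True
    show ?thesis
    proof (cases "x = 1")
      case True then show ?thesis using \<open>y \<le> a\<close> Rc by simp
    next
      case False
      then have "y \<le> rowlen k (x - 1) \<longleftrightarrow> x - 1 \<le> length (filter (\<lambda>v. y \<le> v) k)"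
        using Cons.IH[OF pk _ Cons.prems(3), of "x - 1"] Cons.prems(2) by simp
      then show ?thesis using False Rc \<open>y \<le> a\<close> Cons.prems(2) by auto
    qed
  next
    case False
    then have "filter (\<lambda>v. y \<le> v) k = []" using ak by (force simp: filter_empty_conv)
    moreover have "rowlen (a # k) x \<le> a"
      using Rc rowlen_antimono[OF Cons.prems(1), of 1 x] Cons.prems(2) by (simp add: rowlen_def)
    ultimately show ?thesis using False Cons.prems(2) by auto
  qed
qed

lemma le_rowlen_ptranspose_iff:
  assumes "is_partition k" "1 \<le> x" "1 \<le> y"
  shows "y \<le> rowlen k x \<longleftrightarrow> x \<le> rowlen (ptranspose k) y"
  using le_rowlen_iff_length_filter[OF assms] assms(3) by (simp add: rowlen_ptranspose)

lemma ptranspose_ptranspose: "is_partition k \<Longrightarrow> ptranspose (ptranspose k) = k"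
proof (rule partition_eqI[OF is_partition_ptranspose])
  assume p: "is_partition k"
  fix x :: nat assume x: "1 \<le> x"
  show "rowlen (ptranspose (ptranspose k)) x = rowlen k x"
  proof (rule nat_eqI_le)
    fix y :: nat assume y: "1 \<le> y"
    show "y \<le> rowlen (ptranspose (ptranspose k)) x \<longleftrightarrow> y \<le> rowlen k x"
      using le_rowlen_ptranspose_iff[OF is_partition_ptranspose y x, of k]
        le_rowlen_ptranspose_iff[OF p x y]
      by simp
  qed
qed

lemma rowlen_ptranspose_eq_card:
  assumes p: "is_partition k" and y: "1 \<le> y"
  shows "rowlen (ptranspose k) y = card {x. 1 \<le> x \<and> y \<le> rowlen k x}"
proof -
  have "{x. 1 \<le> x \<and> y \<le> rowlen k x} = {1..rowlen (ptranspose k) y}"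
    using le_rowlen_ptranspose_iff[OF p _ y] by auto
  then show ?thesis by simp
qed

definition in_diagram :: "nat list \<Rightarrow> nat \<Rightarrow> nat \<Rightarrow> bool" where
  "in_diagram k x y \<longleftrightarrow> 1 \<le> x \<and> 1 \<le> y \<and> y \<le> rowlen k x"

lemma in_diagram_ptranspose:
  "is_partition k \<Longrightarrow> in_diagram (ptranspose k) x y \<longleftrightarrow> in_diagram k y x"
  unfolding in_diagram_def using le_rowlen_ptranspose_iff by blast

lemma True_mem_ar_boxes_diagram:
  "(True, (x, y)) \<in> set (ar_boxes k) \<longleftrightarrow> 1 \<le> x \<and> 1 \<le> y \<and> \<not> in_diagram k x y \<and>
    (x = 1 \<or> in_diagram k (x - 1) y) \<and> (y = 1 \<or> in_diagram k x (y - 1))"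
proof -
  have "(True, (x, y)) \<in> set (ar_boxes k) \<longleftrightarrow> y = rowlen k x + 1 \<and> addable_row k x"
    using True_mem_ar_boxes_iff by auto
  then show ?thesis unfolding addable_row_iff in_diagram_def by auto
qed

lemma False_mem_ar_boxes_diagram:
  "(False, (x, y)) \<in> set (ar_boxes k) \<longleftrightarrow>
    in_diagram k x y \<and> \<not> in_diagram k (x + 1) y \<and> \<not> in_diagram k x (y + 1)"
proof -
  have "(False, (x, y)) \<in> set (ar_boxes k) \<longleftrightarrow> y = rowlen k x \<and> removable_row k x"
    using False_mem_ar_boxes_iff by auto
  then show ?thesis unfolding removable_row_iff in_diagram_def by auto
qed

lemma content_swap [simp]: "content (prod.swap b) = - content b"
  by (simp add: content_def prod.swap_def)

lemma sorted_content_greater_unique: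
  "sorted_wrt content_greater xs \<Longrightarrow> sorted_wrt content_greater ys \<Longrightarrow> set xs = set ys \<Longrightarrow>
    xs = ys"
proof (induction xs arbitrary: ys)
  case Nil then show ?case by simp
next
  case (Cons a xs)
  then obtain c ys' where ys: "ys = c # ys'" by (cases ys) auto
  have ac: "a = c"
  proof (rule ccontr)
    assume "a \<noteq> c"
    have "a \<in> set (c # ys')" using Cons.prems(3) ys by (metis list.set_intros(1))
    moreover have "c \<in> set (a # xs)" using Cons.prems(3) ys by (metis list.set_intros(1))
    ultimately have "a \<in> set ys'" "c \<in> set xs" using \<open>a \<noteq> c\<close> by auto
    then have "content_greater c a" "content_greater a c" using Cons.prems ys by auto
    then show False by (simp add: content_greater_def)
  qed
  have "a \<notin> set xs" "a \<notin> set ys'" using Cons.prems ys ac by (auto simp: content_greater_def)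
  then have "set xs = set ys'" using Cons.prems(3) ys ac by auto
  then show ?case using Cons ys ac by simp
qed

lemma ar_boxes_ptranspose:
  assumes p: "is_partition k"
  shows "ar_boxes (ptranspose k) = rev (map (apsnd prod.swap) (ar_boxes k))"
proof (rule sorted_content_greater_unique)
  show "sorted_wrt content_greater (ar_boxes (ptranspose k))"
    by (rule sorted_ar_boxes[OF is_partition_ptranspose])
  have "sorted_wrt content_greater (ar_boxes k)" by (rule sorted_ar_boxes[OF p])
  then show "sorted_wrt content_greater (rev (map (apsnd prod.swap) (ar_boxes k)))"
    unfolding content_greater_def by (simp add: sorted_wrt_rev sorted_wrt_map)
  show "set (ar_boxes (ptranspose k)) = set (rev (map (apsnd prod.swap) (ar_boxes k)))"
  proof (rule set_eqI)
    fix sb :: "bool \<times> (nat \<times> nat)"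
    obtain s x y where sb: "sb = (s, (x, y))" by (cases sb) auto
    have "sb \<in> set (ar_boxes (ptranspose k)) \<longleftrightarrow> (s, (y, x)) \<in> set (ar_boxes k)"
      unfolding sb
      by (cases s)
        (auto simp: True_mem_ar_boxes_diagram False_mem_ar_boxes_diagram
          in_diagram_ptranspose[OF p])
    also have "\<dots> \<longleftrightarrow> sb \<in> set (rev (map (apsnd prod.swap) (ar_boxes k)))"
      unfolding sb by force
    finally show "sb \<in> set (ar_boxes (ptranspose k)) \<longleftrightarrow>
      sb \<in> set (rev (map (apsnd prod.swap) (ar_boxes k)))" .
  qed
qed

lemma of_residue_swap: "of_residue e i (apsnd prod.swap sb) \<longleftrightarrow> of_residue e (- i) sb"
proof -
  have "of_residue e i (apsnd prod.swap sb) \<longleftrightarrow> (- content (snd sb)) mod int e = i mod int e"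
    by (simp add: of_residue_def)
  also have "\<dots> \<longleftrightarrow> int e dvd (- content (snd sb) - i)" by (simp only: mod_eq_dvd_iff)
  also have "\<dots> \<longleftrightarrow> int e dvd (content (snd sb) - (- i))"
    by (metis dvd_minus_iff minus_diff_eq diff_minus_eq_add add.commute uminus_add_conv_diff)
  also have "\<dots> \<longleftrightarrow> of_residue e (- i) sb" by (simp only: of_residue_def mod_eq_dvd_iff)
  finally show ?thesis .
qed

lemma isig_ptranspose:
  assumes p: "is_partition k"
  shows "isig e i (ptranspose k) = rev (map (apsnd prod.swap) (isig e (- i) k))"
proof -
  have "isig e i (ptranspose k) =
      filter (of_residue e i) (rev (map (apsnd prod.swap) (ar_boxes k)))"
    by (simp add: isig_eq_filter[OF is_partition_ptranspose] ar_boxes_ptranspose[OF p])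
  also have "\<dots> = rev (map (apsnd prod.swap) (filter (of_residue e (- i)) (ar_boxes k)))"
    by (simp add: rev_filter[symmetric] filter_map comp_def of_residue_swap)
  finally show ?thesis by (simp add: isig_eq_filter[OF p])
qed

lemma rowlen_ptranspose_add_box:
  assumes p: "is_partition k" and m: "(True, b) \<in> set (ar_boxes k)"
  shows "rowlen (ptranspose (add_box k b)) c =
    rowlen (ptranspose k) c + (if c = snd b then 1 else 0)"
proof (cases "c = 0")
  case False
  then have c: "1 \<le> c" by simp
  obtain r where b: "b = (r, rowlen k r + 1)" and a: "addable_row k r"
    using m True_mem_ar_boxes_iff by blast
  have r: "1 \<le> r" "r \<le> length k + 1" using a by (auto simp: addable_row_def)
  have rl: "rowlen (add_box k b) x = rowlen k x + (if x = r then 1 else 0)" for x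
    unfolding b by (rule rowlen_add_box[OF r])
  have "{x. 1 \<le> x \<and> c \<le> rowlen k x} = {1..rowlen (ptranspose k) c}"
    using le_rowlen_ptranspose_iff[OF p _ c] by auto
  then have fin: "finite {x. 1 \<le> x \<and> c \<le> rowlen k x}" by simp
  have "{x. 1 \<le> x \<and> c \<le> rowlen (add_box k b) x} =
      (if c = snd b then insert r else id) {x. 1 \<le> x \<and> c \<le> rowlen k x}"
    using rl r b by (auto split: if_splits)
  moreover have "r \<notin> {x. 1 \<le> x \<and> c \<le> rowlen k x}" if "c = snd b" using that b by simp
  ultimately show ?thesis
    using rowlen_ptranspose_eq_card[OF add_box_partition[OF p a] c]
      rowlen_ptranspose_eq_card[OF p c] fin b
    by auto
next
  case True
  moreover obtain r where "b = (r, rowlen k r + 1)" using m True_mem_ar_boxes_iff by blast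
  ultimately show ?thesis by simp
qed

lemma add_box_ptranspose:
  assumes p: "is_partition l" and m: "(True, b) \<in> set (ar_boxes l)"
  shows "add_box (ptranspose l) (prod.swap b) = ptranspose (add_box l b)"
proof (rule partition_eqI)
  have "(True, prod.swap b) \<in> set (ar_boxes (ptranspose l))"
    using m by (force simp: ar_boxes_ptranspose[OF p])
  then obtain y where b': "prod.swap b = (y, rowlen (ptranspose l) y + 1)"
    and a': "addable_row (ptranspose l) y"
    using True_mem_ar_boxes_iff by blast
  show "is_partition (add_box (ptranspose l) (prod.swap b))"
    unfolding b' by (rule add_box_partition[OF is_partition_ptranspose a'])
  show "is_partition (ptranspose (add_box l b))" by (rule is_partition_ptranspose)
  have "1 \<le> y" "y \<le> length (ptranspose l) + 1" using a' by (auto simp: addable_row_def)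
  moreover have "y = snd b" using b' by (simp add: prod.swap_def)
  ultimately show
    "rowlen (add_box (ptranspose l) (prod.swap b)) c = rowlen (ptranspose (add_box l b)) c" for c
    unfolding b' using rowlen_add_box rowlen_ptranspose_add_box[OF p m] by simp
qed

lemma Iplus_Iminus_dual_ptranspose:
  assumes "is_partition l"
  shows "Iplus_dual e i (ptranspose l) = rev (map prod.swap (Iplus e (- i) l))"
    and "Iminus_dual e i (ptranspose l) = rev (map prod.swap (Iminus e (- i) l))"
proof -
  have "reduce True (isig e i (ptranspose l)) =
      rev (map (apsnd prod.swap) (reduce False (isig e (- i) l)))"
    by (simp only: isig_ptranspose[OF assms] reduce_rev reduce_map snd_apsnd fst_apsnd)
  then show "Iplus_dual e i (ptranspose l) = rev (map prod.swap (Iplus e (- i) l))"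
    and "Iminus_dual e i (ptranspose l) = rev (map prod.swap (Iminus e (- i) l))"
    by (simp_all add: Iplus_dual_def Iminus_dual_def Iplus_def Iminus_def rev_filter[symmetric]
        filter_map comp_def rev_map[symmetric])
qed

lemma f_dual_ptranspose:
  assumes p: "is_partition l"
  shows "f_dual e i (ptranspose l) = map_option ptranspose (f_op e (- i) l)"
proof (cases "Iplus e (- i) l = []")
  case False
  then have "last (Iplus e (- i) l) \<in> set (Iplus e (- i) l)" by simp
  then have "(True, last (Iplus e (- i) l)) \<in> set (ar_boxes l)" by (rule Iplus_mem_ar_boxes[OF p])
  then show ?thesis
    using False add_box_ptranspose[OF p]
    by (simp add: f_dual_def f_op_def Iplus_Iminus_dual_ptranspose[OF p] hd_rev last_map)
qed (simp add: f_dual_def f_op_def Iplus_Iminus_dual_ptranspose[OF p])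

lemma opow_f_dual_ptranspose:
  assumes p: "is_partition l"
  shows "opow (f_dual e i) m (ptranspose l) = map_option ptranspose (opow (f_op e (- i)) m l)"
proof (induction m)
  case (Suc m)
  show ?case
  proof (cases "opow (f_op e (- i)) m l")
    case (Some l')
    then have "is_partition l'" by (rule is_partition_opow_f_op[OF p])
    then show ?thesis using Suc Some by (simp add: f_dual_ptranspose)
  qed (use Suc in simp)
qed simp

lemma sigma_dual_ptranspose:
  "is_partition l \<Longrightarrow> sigma_dual e i (ptranspose l) = map_option ptranspose (sigma e (- i) l)"
  by (simp add: sigma_dual_def sigma_def Iplus_Iminus_dual_ptranspose opow_f_dual_ptranspose)

lemma cosingular_ptranspose_iff:
  assumes "is_partition l"
  shows "cosingular e (ptranspose l) \<longleftrightarrow> singular e l"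
proof -
  have "e_dual e i (ptranspose l) = None \<longleftrightarrow> e_op e (- i) l = None" for i
    by (simp add: e_dual_def e_op_def Iplus_Iminus_dual_ptranspose[OF assms])
  then show ?thesis unfolding cosingular_def singular_def by (metis minus_minus)
qed

lemma C0_dual_ptranspose:
  assumes p: "is_partition l"
  shows "C0_dual e n (ptranspose l) = map_option ptranspose (sigma_chain e int n l)"
proof (induction n)
  case (Suc n)
  have step: "C0_dual e (Suc n) l' = Option.bind (C0_dual e n l') (sigma_dual e (- int n))" for l'
    by (simp add: C0_dual_def)
  show ?case
  proof (cases "sigma_chain e int n l")
    case (Some l')
    then have "is_partition l'" by (rule is_partition_sigma_chain[OF p])
    then show ?thesis using Suc Some step by (simp add: sigma_chain_Suc sigma_dual_ptranspose)
  qed (use Suc step in \<open>simp add: sigma_chain_Suc\<close>)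
qed (simp add: C0_dual_def)

section \<open>Singular partitions\<close>

lemma last_row_not_dvd:
  assumes "\<not> e dvd rowlen k x"
  obtains x0 where "1 \<le> x0" "x0 \<le> length k" "\<not> e dvd rowlen k x0"
    "\<And>y. x0 < y \<Longrightarrow> e dvd rowlen k y"
proof -
  define S where "S = {x. \<not> e dvd rowlen k x}"
  have S: "S \<subseteq> {1..length k}"
  proof
    fix y assume "y \<in> S"
    then have "\<not> e dvd rowlen k y" by (simp add: S_def)
    then have "rowlen k y \<noteq> 0" by (rule contrapos_nn) simp
    then show "y \<in> {1..length k}" by (simp add: rowlen_def split: if_splits)
  qed
  then have fin: "finite S" by (rule finite_subset) simp
  have "x \<in> S" using assms by (simp add: S_def)
  then have max: "Max S \<in> S" "\<And>y. Max S < y \<Longrightarrow> y \<notin> S"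
    using Max_in[OF fin] Max_ge[OF fin] by (blast, fastforce)
  show ?thesis
  proof (rule that)
    show "1 \<le> Max S" "Max S \<le> length k" using max(1) S by (simp_all add: subset_iff)
    show "\<not> e dvd rowlen k (Max S)" using max(1) by (simp add: S_def)
    show "e dvd rowlen k y" if "Max S < y" for y using max(2)[OF that] by (simp add: S_def)
  qed
qed

lemma isig_at_last_row_not_dvd:
  assumes p: "is_partition k" and x0: "1 \<le> x0" "x0 \<le> length k" "\<not> e dvd rowlen k x0"
    and below: "\<And>y. x0 < y \<Longrightarrow> e dvd rowlen k y"
  obtains P ws
  where "isig e (content (x0, rowlen k x0)) k = P @ (False, (x0, rowlen k x0)) # concat ws"
    and "\<forall>w\<in>set ws. cancelling_block False w"
proof -
  define j where "j = content (x0, rowlen k x0)"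
  define g where "g = (\<lambda>y. filter (of_residue e j) (gap_entries k y))"
  define M where "M = length k + 1"
  have "isig e j k = concat (map g [0..<M])"
    unfolding g_def M_def by (rule isig_eq_gap_entries[OF p]) simp
  also have "[0..<M] = [0..<x0] @ x0 # [Suc x0..<M]"
    using upt_split_at[of 0 x0 M] x0 by (simp add: M_def)
  finally have sig: "isig e j k = concat (map g [0..<x0]) @ g x0 @ concat (map g [Suc x0..<M])"
    by simp
  have dvd_next: "e dvd rowlen k (x0 + 1)" using below by simp
  have "rowlen k (x0 + 1) \<le> rowlen k x0" using rowlen_antimono[OF p x0(1)] by simp
  then have "rowlen k (x0 + 1) < rowlen k x0"
    using dvd_next x0(3) by (cases "rowlen k (x0 + 1) = rowlen k x0") auto
  moreover have "\<not> of_residue e j (True, (x0 + 1, rowlen k (x0 + 1) + 1))"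
  proof
    assume "of_residue e j (True, (x0 + 1, rowlen k (x0 + 1) + 1))"
    then have diff: "int e dvd int (rowlen k (x0 + 1)) - int (rowlen k x0)"
      by (simp add: of_residue_iff_dvd j_def content_def)
    have "int e dvd int (rowlen k (x0 + 1))" using dvd_next by simp
    from dvd_diff[OF this diff] have "int e dvd int (rowlen k x0)" by simp
    then show False using x0(3) by simp
  qed
  ultimately have "g x0 = [(False, (x0, rowlen k x0))]"
    using x0(1) by (simp add: g_def gap_entries_pos of_residue_def j_def)
  moreover have "cancelling_block False (g y)" if y: "x0 < y" for y
  proof -
    have "of_residue e j (False, (y, rowlen k y + 0)) \<longleftrightarrow> int e dvd 0 - int y - j"
      "of_residue e j (True, (y + 1, rowlen k (y + 1) + 1)) \<longleftrightarrow> int e dvd 1 - int (y + 1) - j"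
      using below y by (simp_all only: of_residue_add_dvd_iff) simp_all
    then show ?thesis unfolding g_def using y x0(1)
      by (intro cancelling_block_gap_entries) simp_all
  qed
  ultimately show ?thesis
    using sig that[of "concat (map g [0..<x0])" "map g [Suc x0..<M]"] by (simp add: j_def)
qed

lemma singular_rowlen_dvd:
  assumes p: "is_partition k" and s: "singular e k"
  shows "e dvd rowlen k x"
proof (rule ccontr)
  assume "\<not> e dvd rowlen k x"
  then obtain x0 where x0: "1 \<le> x0" "x0 \<le> length k" "\<not> e dvd rowlen k x0"
    "\<And>y. x0 < y \<Longrightarrow> e dvd rowlen k y"
    by (meson last_row_not_dvd)
  define j where "j = content (x0, rowlen k x0)"
  obtain P ws where "isig e j k = P @ (False, (x0, rowlen k x0)) # concat ws"
    and "\<forall>w\<in>set ws. cancelling_block False w"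
    using isig_at_last_row_not_dvd[OF p x0] unfolding j_def by blast
  then have "(False, (x0, rowlen k x0)) \<in> set (reduce False (isig e j k))"
    by (simp add: minus_survives_cancelling_blocks)
  then have "Iminus e j k \<noteq> []" by (force simp: Iminus_def filter_empty_conv)
  then have "e_op e j k \<noteq> None" by (simp add: e_op_def)
  then show False using s by (simp add: singular_def)
qed

section \<open>The partitions \<open>\<nu>\<^sub>n\<close>\<close>

definition nu_rowlen :: "nat \<Rightarrow> nat \<Rightarrow> nat \<Rightarrow> nat" where
  "nu_rowlen d n x = (if x \<le> n then (n - x) div d + 1 else 0)"

definition nu_step_rows :: "nat \<Rightarrow> nat \<Rightarrow> nat set" where
  "nu_step_rows d n = {t. 1 \<le> t \<and> t \<le> n + 1 \<and> d dvd (n + 1 - t)}"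

definition conj_nu_step_rows :: "nat \<Rightarrow> nat \<Rightarrow> nat set" where
  "conj_nu_step_rows d m = {t. 1 \<le> t \<and> (t - 1) * d \<le> m}"

lemma nu_rowlen_Suc:
  assumes "1 \<le> x"
  shows "nu_rowlen d (Suc n) x = nu_rowlen d n x + (if x \<in> nu_step_rows d n then 1 else 0)"
proof (cases "x \<le> n")
  case True
  then have "Suc n - x = Suc (n - x)" by simp
  then show ?thesis using True assms by (simp add: nu_rowlen_def nu_step_rows_def Suc_div_dvd)
next
  case False
  then show ?thesis using assms by (cases "x = Suc n") (auto simp: nu_rowlen_def nu_step_rows_def)
qed

lemma nu_rowlen_drop:
  assumes "1 \<le> y"
  shows "nu_rowlen d n y = nu_rowlen d n (y + 1) + (if y + 1 \<in> nu_step_rows d n then 1 else 0)"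
proof (cases "y < n")
  case True
  then have "n - y = Suc (n - (y + 1))" by simp
  then show ?thesis using True assms by (simp add: nu_rowlen_def nu_step_rows_def Suc_div_dvd)
next
  case False
  then show ?thesis using assms by (cases "y = n") (auto simp: nu_rowlen_def nu_step_rows_def)
qed

lemma nu_step_rows_value:
  assumes "0 < d" "1 \<le> y" "y + 1 \<in> nu_step_rows d n"
  shows "y \<le> n \<and> n = y + nu_rowlen d n (y + 1) * d"
proof -
  have yn: "y \<le> n" "d dvd n - y" using assms by (auto simp: nu_step_rows_def)
  have "nu_rowlen d n (y + 1) = (n - y) div d"
  proof (cases "y = n")
    case True then show ?thesis by (simp add: nu_rowlen_def)
  next
    case False
    then have "n - y = Suc (n - (y + 1))" using yn by simp
    then have "(n - y) div d = (n - (y + 1)) div d + 1" using yn(2) by (simp add: Suc_div_dvd)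
    then show ?thesis using False yn by (simp add: nu_rowlen_def)
  qed
  then show ?thesis using yn by simp
qed

lemma nu_rowlen_1_dvd_iff:
  assumes e: "1 < e"
  shows "e dvd (nu_rowlen (e - 1) n 1 + n) \<longleftrightarrow> (e - 1) dvd n"
proof (cases n)
  case 0 then show ?thesis by (simp add: nu_rowlen_def)
next
  case (Suc m)
  define d where "d = e - 1"
  have d: "0 < d" "e = d + 1" using e by (auto simp: d_def)
  define q where "q = m div d"
  define r where "r = m mod d"
  have m: "m = q * d + r" and r: "r < d" using d by (auto simp: q_def r_def)
  have n1: "nu_rowlen d n 1 = q + 1" using Suc by (simp add: nu_rowlen_def q_def)
  have "nu_rowlen d n 1 + n = (q + 1) + (q * d + r + 1)" using n1 Suc m by simp
  also have "\<dots> = q * e + (r + 2)" using d(2) by (simp add: algebra_simps)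
  finally have "nu_rowlen d n 1 + n = q * e + (r + 2)" .
  moreover have "e dvd (q * e + (r + 2)) \<longleftrightarrow> e dvd (r + 2)"
    by (rule dvd_add_right_iff) simp
  ultimately have "e dvd (nu_rowlen d n 1 + n) \<longleftrightarrow> e dvd (r + 2)" by simp
  also have "\<dots> \<longleftrightarrow> r + 2 = e"
  proof
    assume "e dvd r + 2"
    moreover have "r + 2 \<le> e" "0 < r + 2" using r d by auto
    ultimately show "r + 2 = e" using dvd_imp_le[of e "r + 2"] by simp
  qed simp
  also have "\<dots> \<longleftrightarrow> d dvd n"
  proof -
    have "n = q * d + (r + 1)" using Suc m by simp
    moreover have "d dvd (q * d + (r + 1)) \<longleftrightarrow> d dvd (r + 1)"
      by (rule dvd_add_right_iff) simp
    ultimately have "d dvd n \<longleftrightarrow> d dvd r + 1" by simp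
    also have "\<dots> \<longleftrightarrow> r + 1 = d"
    proof
      assume "d dvd r + 1"
      then show "r + 1 = d" using dvd_imp_le[of d "r + 1"] r by simp
    qed simp
    finally show ?thesis using d by auto
  qed
  finally show ?thesis by (simp add: d_def)
qed

lemma rowlen_nu:
  assumes e: "1 < e" and x: "1 \<le> x"
  shows "rowlen (nu e n) x = nu_rowlen (e - 1) n x"
proof -
  define d where "d = e - 1"
  have d: "0 < d" using e by (simp add: d_def)
  define f where "f = (\<lambda>k. n - k * d)"
  have "rowlen (nu e n) x = length (filter (\<lambda>v. x \<le> v) (filter (\<lambda>v. 0 < v) (map f [0..<n])))"
    unfolding nu_def using x by (simp add: rowlen_ptranspose f_def d_def)
  also have "\<dots> = length (filter (\<lambda>k. x \<le> f k) [0..<n])"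
  proof -
    have "filter (\<lambda>v. x \<le> v) (filter (\<lambda>v. 0 < v) (map f [0..<n])) =
        filter (\<lambda>v. x \<le> v) (map f [0..<n])"
      unfolding filter_filter by (rule filter_cong) (use x in auto)
    then show ?thesis by (simp add: filter_map comp_def del: upt_Suc)
  qed
  also have "\<dots> = card {k. k < n \<and> x \<le> f k}"
  proof -
    have "{i. i < length [0..<n] \<and> x \<le> f ([0..<n] ! i)} = {k. k < n \<and> x \<le> f k}" by auto
    then show ?thesis by (simp only: length_filter_conv_card)
  qed
  also have "\<dots> = nu_rowlen d n x"
  proof (cases "x \<le> n")
    case True
    have "{k. k < n \<and> x \<le> f k} = {..(n - x) div d}"
    proof (rule set_eqI, rule iffI)
      fix k assume "k \<in> {k. k < n \<and> x \<le> f k}"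
      then have "x \<le> n - k * d" by (auto simp: f_def)
      then have "k * d \<le> n - x" using x by arith
      then show "k \<in> {..(n - x) div d}" using less_eq_div_iff_mult_less_eq[OF d] by simp
    next
      fix k assume "k \<in> {..(n - x) div d}"
      then have kd: "k * d \<le> n - x" using less_eq_div_iff_mult_less_eq[OF d] by simp
      moreover have "k \<le> k * d" using d by simp
      ultimately have "k < n" using x True by arith
      moreover have "x \<le> f k" using kd x True unfolding f_def by arith
      ultimately show "k \<in> {k. k < n \<and> x \<le> f k}" by simp
    qed
    then show ?thesis using True by (simp add: nu_rowlen_def)
  next
    case False
    then have "{k. k < n \<and> x \<le> f k} = {}" by (auto simp: f_def)
    then show ?thesis using False by (simp add: nu_rowlen_def)
  qed
  finally show ?thesis by (simp add: d_def)
qed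

lemma rowlen_ptranspose_nu:
  assumes e: "1 < e" and x: "1 \<le> x"
  shows "rowlen (ptranspose (nu e n)) x = n - (x - 1) * (e - 1)"
proof (rule nat_eqI_le)
  fix z :: nat assume z: "1 \<le> z"
  have d: "0 < e - 1" using e by simp
  have p: "is_partition (nu e n)" unfolding nu_def by (rule is_partition_ptranspose)
  have "z \<le> rowlen (ptranspose (nu e n)) x \<longleftrightarrow> x \<le> nu_rowlen (e - 1) n z"
    using le_rowlen_ptranspose_iff[OF p z x] rowlen_nu[OF e z] by simp
  also have "\<dots> \<longleftrightarrow> z \<le> n - (x - 1) * (e - 1)"
  proof (cases "z \<le> n")
    case True
    have "x \<le> (n - z) div (e - 1) + 1 \<longleftrightarrow> (x - 1) * (e - 1) \<le> n - z"
      using x less_eq_div_iff_mult_less_eq[OF d] by (metis le_diff_conv)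
    also have "\<dots> \<longleftrightarrow> z \<le> n - (x - 1) * (e - 1)" using True z by arith
    finally show ?thesis using True by (simp add: nu_rowlen_def)
  qed (use x in \<open>simp add: nu_rowlen_def\<close>)
  finally show "z \<le> rowlen (ptranspose (nu e n)) x \<longleftrightarrow> z \<le> n - (x - 1) * (e - 1)" .
qed

section \<open>Adding \<open>\<nu>\<^sub>n\<close> to singular partitions\<close>

lemma single_plus_signature_nu:
  assumes e: "1 < e" and l: "is_partition l" "\<And>x. e dvd rowlen l x" and k: "is_partition k"
    and rk: "\<And>x. 1 \<le> x \<Longrightarrow> rowlen k x = rowlen l x + nu_rowlen (e - 1) n x"
  shows "single_plus_signature e (- int n) k (length k + n + 2) (nu_step_rows (e - 1) n)"
proof (rule single_plus_signature.intro)
  define d where "d = e - 1"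
  have d: "0 < d" "int e = int d + 1" using e by (auto simp: d_def)
  define a where "a = nu_rowlen d n"
  have res_plus: "of_residue e (- int n) (True, (y + 1, rowlen k (y + 1) + 1)) \<longleftrightarrow>
      int e dvd int (a (y + 1)) - int y + int n" for y
    using rk[of "y + 1"]
      of_residue_add_dvd_iff[OF l(2)[of "y + 1"], of "- int n" True "y + 1" "a (y + 1) + 1"]
    by (simp add: a_def d_def add.assoc)
  have res_minus: "of_residue e (- int n) (False, (y, rowlen k y)) \<longleftrightarrow>
      int e dvd int (a y) - int y + int n" if "1 \<le> y" for y
    using rk[OF that] of_residue_add_dvd_iff[OF l(2)[of y], of "- int n" False y "a y"]
    by (simp add: a_def d_def)
  show "is_partition k" "1 < e" "length k + 1 \<le> length k + n + 2" by (fact k, fact e, simp)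
  show "nu_step_rows (e - 1) n \<subseteq> {1..length k + n + 2}" by (auto simp: nu_step_rows_def)
  show "1 \<in> nu_step_rows (e - 1) n \<longleftrightarrow> of_residue e (- int n) (True, (1, rowlen k 1 + 1))"
    using res_plus[of 0] nu_rowlen_1_dvd_iff[OF e, of n]
    by (simp add: nu_step_rows_def a_def d_def flip: of_nat_add)
  show "rowlen k (y + 1) < rowlen k y \<and>
      of_residue e (- int n) (True, (y + 1, rowlen k (y + 1) + 1)) \<and>
      \<not> of_residue e (- int n) (False, (y, rowlen k y))"
    if y: "1 \<le> y" and t: "y + 1 \<in> nu_step_rows (e - 1) n" for y
  proof -
    have drop: "a y = a (y + 1) + 1" using nu_rowlen_drop[OF y, of d n] t by (simp add: a_def d_def)
    have "n = y + a (y + 1) * d" using nu_step_rows_value[OF d(1) y] t by (simp add: a_def d_def)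
    then have plus: "int (a (y + 1)) - int y + int n = int e * int (a (y + 1))"
      by (simp add: d(2) algebra_simps flip: of_nat_mult of_nat_add)
    have "rowlen l (y + 1) \<le> rowlen l y" using rowlen_antimono[OF l(1) y] by simp
    then have "rowlen k (y + 1) < rowlen k y"
      using rk[OF y] rk[of "y + 1"] drop by (simp add: a_def d_def)
    moreover have "of_residue e (- int n) (True, (y + 1, rowlen k (y + 1) + 1))"
      unfolding res_plus plus by simp
    moreover have "int (a y) - int y + int n = int e * int (a (y + 1)) + 1"
      using plus drop by simp
    then have "\<not> of_residue e (- int n) (False, (y, rowlen k y))"
      unfolding res_minus[OF y] using not_dvd_mult_add[of 1 e "int (a (y + 1))"] e by simp
    ultimately show ?thesis by blast
  qed
  show "of_residue e (- int n) (False, (y, rowlen k y)) \<longleftrightarrow>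
      of_residue e (- int n) (True, (y + 1, rowlen k (y + 1) + 1))"
    if y: "1 \<le> y" and t: "y + 1 \<notin> nu_step_rows (e - 1) n" for y
    unfolding res_plus res_minus[OF y]
    using nu_rowlen_drop[OF y, of d n] t by (simp add: a_def d_def)
qed

lemma conj_nu_residues_iff:
  assumes e: "1 < e" and y: "1 \<le> y" and m: "m < y * (e - 1)"
  shows "int e dvd int (m - (y - 1) * (e - 1)) - int y - int m \<longleftrightarrow> int e dvd 0 - int y - int m"
proof (cases "(y - 1) * (e - 1) < m")
  case True
  define d where "d = e - 1"
  define w where "w = m - (y - 1) * d"
  have d: "int e = int d + 1" using e by (simp add: d_def)
  have lt: "(y - 1) * d < m" using True by (simp add: d_def)
  moreover have "m < (y - 1) * d + d" using m y by (cases y) (auto simp: d_def)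
  ultimately have w: "0 < w" "w < d" by (simp_all add: w_def)
  have mi: "int m = (int y - 1) * int d + int w" using lt y by (simp add: w_def of_nat_diff)
  have "int w - int y - int m = int e * (- int y) + int d"
    "0 - int y - int m = int e * (- int y) + int (d - w)"
    using w d by (simp_all add: mi of_nat_diff algebra_simps)
  moreover have "\<not> int e dvd int e * (- int y) + int d"
    by (rule not_dvd_mult_add) (use w d in simp_all)
  moreover have "\<not> int e dvd int e * (- int y) + int (d - w)"
    by (rule not_dvd_mult_add) (use w d in simp_all)
  ultimately show ?thesis by (simp add: w_def d_def)
qed simp

lemma single_plus_signature_conj_nu:
  assumes e: "1 < e" and l: "is_partition l" "\<And>x. e dvd rowlen l x" and k: "is_partition k"
    and rk: "\<And>x. 1 \<le> x \<Longrightarrow> rowlen k x = rowlen l x + (m - (x - 1) * (e - 1))"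
  shows "single_plus_signature e (int m) k (length k + m + 2) (conj_nu_step_rows (e - 1) m)"
proof (rule single_plus_signature.intro)
  define d where "d = e - 1"
  have d: "1 \<le> d" "int e = int d + 1" using e by (auto simp: d_def)
  define a where "a x = m - (x - 1) * d" for x
  have rk': "rowlen k x = rowlen l x + a x" if "1 \<le> x" for x
    using rk[OF that] by (simp add: a_def d_def)
  have res_plus: "of_residue e (int m) (True, (y + 1, rowlen k (y + 1) + 1)) \<longleftrightarrow>
      int e dvd int (a (y + 1)) - int y - int m" for y
    using rk[of "y + 1"]
      of_residue_add_dvd_iff[OF l(2)[of "y + 1"], of "int m" True "y + 1" "a (y + 1) + 1"]
    by (simp add: a_def d_def add.assoc)
  have res_minus: "of_residue e (int m) (False, (y, rowlen k y)) \<longleftrightarrow>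
      int e dvd int (a y) - int y - int m" if "1 \<le> y" for y
    using rk[OF that] of_residue_add_dvd_iff[OF l(2)[of y], of "int m" False y "a y"]
    by (simp add: a_def d_def)
  show "is_partition k" "1 < e" "length k + 1 \<le> length k + m + 2" by (fact k, fact e, simp)
  show "conj_nu_step_rows (e - 1) m \<subseteq> {1..length k + m + 2}"
  proof
    fix t assume "t \<in> conj_nu_step_rows (e - 1) m"
    then have "1 \<le> t" "(t - 1) * d \<le> m" by (auto simp: conj_nu_step_rows_def d_def)
    moreover have "t - 1 \<le> (t - 1) * d" using d(1) by simp
    ultimately have "t - 1 \<le> m" by linarith
    then show "t \<in> {1..length k + m + 2}" using \<open>1 \<le> t\<close> by simp
  qed
  show "1 \<in> conj_nu_step_rows (e - 1) m \<longleftrightarrow> of_residue e (int m) (True, (1, rowlen k 1 + 1))"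
    using res_plus[of 0] by (simp add: conj_nu_step_rows_def a_def)
  show "rowlen k (y + 1) < rowlen k y \<and>
      of_residue e (int m) (True, (y + 1, rowlen k (y + 1) + 1)) \<and>
      \<not> of_residue e (int m) (False, (y, rowlen k y))"
    if y: "1 \<le> y" and t: "y + 1 \<in> conj_nu_step_rows (e - 1) m" for y
  proof -
    have yd: "y * d \<le> m" using t by (simp add: conj_nu_step_rows_def d_def)
    have drop: "a y = a (y + 1) + d"
      using yd y by (simp add: a_def algebra_simps)
    have plus: "int (a (y + 1)) - int y - int m = int e * (- int y)"
      using yd by (simp add: a_def d(2) of_nat_diff algebra_simps)
    have "rowlen l (y + 1) \<le> rowlen l y" using rowlen_antimono[OF l(1) y] by simp
    then have "rowlen k (y + 1) < rowlen k y"
      using rk'[OF y] rk'[of "y + 1"] drop d(1) by simp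
    moreover have "of_residue e (int m) (True, (y + 1, rowlen k (y + 1) + 1))"
      unfolding res_plus plus by simp
    moreover have minus: "int (a y) - int y - int m = int e * (- int y) + int d"
      using plus drop d(2) by (simp add: algebra_simps)
    have "\<not> int e dvd int e * (- int y) + int d" by (rule not_dvd_mult_add) (use d in simp_all)
    then have "\<not> of_residue e (int m) (False, (y, rowlen k y))"
      unfolding res_minus[OF y] minus .
    ultimately show ?thesis by blast
  qed
  show "of_residue e (int m) (False, (y, rowlen k y)) \<longleftrightarrow>
      of_residue e (int m) (True, (y + 1, rowlen k (y + 1) + 1))"
    if y: "1 \<le> y" and t: "y + 1 \<notin> conj_nu_step_rows (e - 1) m" for y
    unfolding res_plus res_minus[OF y]
    using conj_nu_residues_iff[OF e y] t by (simp add: a_def d_def conj_nu_step_rows_def)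
qed

lemma C0_singular:
  assumes e: "1 < e" and l: "is_partition l" and s: "singular e l"
  shows "C0 e n l = Some (padd l (nu e n))"
proof -
  have dvd: "\<And>x. e dvd rowlen l x" using singular_rowlen_dvd[OF l s] .
  have "\<exists>l'. sigma_chain e (\<lambda>k. - int k) n l = Some l' \<and> is_partition l' \<and>
      (\<forall>x. 1 \<le> x \<longrightarrow> rowlen l' x = rowlen l x + nu_rowlen (e - 1) n x)"
  proof (rule sigma_chain_single_plus[OF l, where T = "nu_step_rows (e - 1)"])
    show "single_plus_signature e (- int m) l' (length l' + m + 2) (nu_step_rows (e - 1) m)"
      if "is_partition l'" "\<And>x. 1 \<le> x \<Longrightarrow> rowlen l' x = rowlen l x + nu_rowlen (e - 1) m x"
      for m l'
      by (rule single_plus_signature_nu[OF e l dvd that])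
    show "nu_rowlen (e - 1) 0 x = 0" if "1 \<le> x" for x using that by (simp add: nu_rowlen_def)
  qed (rule nu_rowlen_Suc)
  then obtain l' where l': "sigma_chain e (\<lambda>k. - int k) n l = Some l'" "is_partition l'"
    "\<And>x. 1 \<le> x \<Longrightarrow> rowlen l' x = rowlen l x + nu_rowlen (e - 1) n x"
    by blast
  have "is_partition (nu e n)" unfolding nu_def by (rule is_partition_ptranspose)
  then have "l' = padd l (nu e n)"
    using l' by (intro partition_eqI is_partition_padd l)
      (simp_all add: rowlen_padd rowlen_nu[OF e])
  then show ?thesis using l' by (simp add: C0_eq_sigma_chain)
qed

lemma C0_dual_cosingular:
  assumes e: "1 < e" and mu: "is_partition mu" and s: "cosingular e mu"
  shows "C0_dual e n mu = Some (ptranspose (padd (ptranspose mu) (ptranspose (nu e n))))"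
proof -
  define l where "l = ptranspose mu"
  have l: "is_partition l" by (simp add: l_def is_partition_ptranspose)
  have mu_l: "mu = ptranspose l" using ptranspose_ptranspose[OF mu] by (simp add: l_def)
  have "singular e l" using s cosingular_ptranspose_iff[OF l] mu_l by simp
  then have dvd: "\<And>x. e dvd rowlen l x" using singular_rowlen_dvd[OF l] by blast
  have a_Suc: "Suc m - c = m - c + (if c \<le> m then 1 else 0)" for m c :: nat
    by (simp add: Suc_diff_le)
  have "\<exists>l'. sigma_chain e int n l = Some l' \<and> is_partition l' \<and>
      (\<forall>x. 1 \<le> x \<longrightarrow> rowlen l' x = rowlen l x + (n - (x - 1) * (e - 1)))"
  proof (rule sigma_chain_single_plus[OF l, where a = "\<lambda>m x. m - (x - 1) * (e - 1)"
        and T = "conj_nu_step_rows (e - 1)"])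
    show "single_plus_signature e (int m) l' (length l' + m + 2) (conj_nu_step_rows (e - 1) m)"
      if "is_partition l'" "\<And>x. 1 \<le> x \<Longrightarrow> rowlen l' x = rowlen l x + (m - (x - 1) * (e - 1))"
      for m l'
      by (rule single_plus_signature_conj_nu[OF e l dvd that])
  qed (simp_all add: conj_nu_step_rows_def a_Suc)
  then obtain l' where l': "sigma_chain e int n l = Some l'" "is_partition l'"
    "\<And>x. 1 \<le> x \<Longrightarrow> rowlen l' x = rowlen l x + (n - (x - 1) * (e - 1))"
    by blast
  then have "l' = padd l (ptranspose (nu e n))"
    by (intro partition_eqI is_partition_padd l is_partition_ptranspose)
      (simp_all add: rowlen_padd rowlen_ptranspose_nu[OF e])
  moreover have "C0_dual e n mu = Some (ptranspose l')"
    using C0_dual_ptranspose[OF l, of e n] l'(1) by (simp add: mu_l)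
  ultimately show ?thesis by (simp add: l_def)
qed

theorem corollary6p11:
  fixes e n :: nat
  assumes "e > 1" and "n \<ge> 1"
  shows "(\<forall>lam. is_partition lam \<and> singular e lam \<longrightarrow> C0 e n lam = Some (padd lam (nu e n)))
       \<and> (\<forall>mu. is_partition mu \<and> cosingular e mu \<longrightarrow>
              C0_dual e n mu = Some (ptranspose (padd (ptranspose mu) (ptranspose (nu e n)))))"
  using C0_singular[OF assms(1)] C0_dual_cosingular[OF assms(1)] by blast

end
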